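(* Let $\mathbb A$ be an abelian category. Let $a:A_1\to A_0$, $b:B_1\to B_0$ and $b':B'_1\to B'_0$ be objects of $\mathbb A^{[1]}$ and let $(u_0,u_1):b\to b'$ be a morphism in $\mathbb A^{[1]}$ such that the induced morphisms $\mathrm{Ker}(b)\to\mathrm{Ker}(b')$ and $\mathrm{Coker}(b)\to\mathrm{Coker}(b')$ are isomorphisms. If $A_0$ is a projective object of $\mathbb A$, then the functor of groupoids $(u_0,u_1)\circ-:\mathbf{Hom}_{\mathbb A^{[1]}}(a,b)\to\mathbf{Hom}_{\mathbb A^{[1]}}(a,b')$ is an equivalence of categories.
   Context: Let $\mathbb A$ be an abelian category. The 2-category $\mathbb A^{[1]}$ has as objects the morphisms $a:A_1\to A_0$ of $\mathbb A$. For objects $a:A_1\to A_0$ and $b:B_1\to B_0$, a morphism $a\to b$ is a pair $(f_0,f_1)$ of morphisms $f_i:A_i\to B_i$ of $\mathbb A$ with $b f_1=f_0 a$; composition is componentwise. A 2-arrow $(f_0,f_1)\Rightarrow(g_0,g_1)$ between morphisms $a\to b$ is a morphism $\alpha:A_0\to B_1$ of $\mathbb A$ with $f_1-g_1=\alpha a$ and $f_0-g_0=b\alpha$; vertical composition is addition of such $\alpha$'s, and whiskering is given by $(h_0,h_1)\circ\alpha=h_1\alpha$ and $\alpha\circ(e_0,e_1)=\alpha e_0$. All 2-arrows are invertible, so each $\mathbf{Hom}_{\mathbb A^{[1]}}(a,b)$ is a groupoid. A morphism $(f_0,f_1):a\to b$ induces $\mathrm{Ker}(a)\to\mathrm{Ker}(b)$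 (restriction of $f_1$) and $\mathrm{Coker}(a)\to\mathrm{Coker}(b)$ (induced by $f_0$). *)

theory Defs
  imports Main
begin

record ('o, 'm) acat =
  Obj :: "'o set"
  Arr :: "'m set"
  Dom :: "'m \<Rightarrow> 'o"
  Cod :: "'m \<Rightarrow> 'o"
  Cmp :: "'m \<Rightarrow> 'm \<Rightarrow> 'm"   (* Cmp g f = g o f *)
  Idm :: "'o \<Rightarrow> 'm"
  Add :: "'m \<Rightarrow> 'm \<Rightarrow> 'm"
  Zer :: "'o \<Rightarrow> 'o \<Rightarrow> 'm"
  Ngt :: "'m \<Rightarrow> 'm"

definition hom :: "('o, 'm) acat \<Rightarrow> 'o \<Rightarrow> 'o \<Rightarrow> 'm set" where
  "hom C x y = {f \<in> Arr C. Dom C f = x \<and> Cod C f = y}"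

definition category :: "('o, 'm) acat \<Rightarrow> bool" where
  "category C \<longleftrightarrow>
     (\<forall>f \<in> Arr C. Dom C f \<in> Obj C \<and> Cod C f \<in> Obj C) \<and>
     (\<forall>x \<in> Obj C. Idm C x \<in> hom C x x) \<and>
     (\<forall>x y z f g. f \<in> hom C x y \<longrightarrow> g \<in> hom C y z \<longrightarrow> Cmp C g f \<in> hom C x z) \<and>
     (\<forall>w x y z f g h. f \<in> hom C w x \<longrightarrow> g \<in> hom C x y \<longrightarrow> h \<in> hom C y z \<longrightarrow>
         Cmp C h (Cmp C g f) = Cmp C (Cmp C h g) f) \<and>
     (\<forall>x y f. f \<in> hom C x y \<longrightarrow> Cmp C f (Idm C x) = f \<and> Cmp C (Idm C y) f = f)"

definition preadditive :: "('o, 'm) acat \<Rightarrow> bool" where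
  "preadditive C \<longleftrightarrow> category C \<and>
     (\<forall>x \<in> Obj C. \<forall>y \<in> Obj C.
        Zer C x y \<in> hom C x y \<and>
        (\<forall>f \<in> hom C x y. Add C f (Zer C x y) = f \<and> Ngt C f \<in> hom C x y \<and>
                          Add C f (Ngt C f) = Zer C x y) \<and>
        (\<forall>f \<in> hom C x y. \<forall>g \<in> hom C x y. Add C f g \<in> hom C x y \<and> Add C f g = Add C g f) \<and>
        (\<forall>f \<in> hom C x y. \<forall>g \<in> hom C x y. \<forall>h \<in> hom C x y.
            Add C (Add C f g) h = Add C f (Add C g h))) \<and>
     (\<forall>x y z f g h. f \<in> hom C x y \<longrightarrow> g \<in> hom C x y \<longrightarrow> h \<in> hom C y z \<longrightarrow>
         Cmp C h (Add C f g) = Add C (Cmp C h f) (Cmp C h g)) \<and>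
     (\<forall>w x y f g h. f \<in> hom C x y \<longrightarrow> g \<in> hom C x y \<longrightarrow> h \<in> hom C w x \<longrightarrow>
         Cmp C (Add C f g) h = Add C (Cmp C f h) (Cmp C g h))"

definition zero_object :: "('o, 'm) acat \<Rightarrow> 'o \<Rightarrow> bool" where
  "zero_object C z \<longleftrightarrow> z \<in> Obj C \<and>
     (\<forall>x \<in> Obj C. (\<exists>!f. f \<in> hom C z x) \<and> (\<exists>!f. f \<in> hom C x z))"

definition has_biproduct :: "('o, 'm) acat \<Rightarrow> 'o \<Rightarrow> 'o \<Rightarrow> bool" where
  "has_biproduct C x y \<longleftrightarrow> (\<exists>p i1 i2 p1 p2. p \<in> Obj C \<and>
     i1 \<in> hom C x p \<and> i2 \<in> hom C y p \<and> p1 \<in> hom C p x \<and> p2 \<in> hom C p y \<and>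
     Cmp C p1 i1 = Idm C x \<and> Cmp C p2 i2 = Idm C y \<and>
     Add C (Cmp C i1 p1) (Cmp C i2 p2) = Idm C p)"

definition is_kernel :: "('o, 'm) acat \<Rightarrow> 'm \<Rightarrow> 'm \<Rightarrow> bool" where
  "is_kernel C f k \<longleftrightarrow> f \<in> Arr C \<and> k \<in> Arr C \<and> Cod C k = Dom C f \<and>
     Cmp C f k = Zer C (Dom C k) (Cod C f) \<and>
     (\<forall>w g. g \<in> hom C w (Dom C f) \<longrightarrow> Cmp C f g = Zer C w (Cod C f) \<longrightarrow>
        (\<exists>!h. h \<in> hom C w (Dom C k) \<and> Cmp C k h = g))"

definition is_cokernel :: "('o, 'm) acat \<Rightarrow> 'm \<Rightarrow> 'm \<Rightarrow> bool" where
  "is_cokernel C f q \<longleftrightarrow> f \<in> Arr C \<and> q \<in> Arr C \<and> Dom C q = Cod C f \<and>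
     Cmp C q f = Zer C (Dom C f) (Cod C q) \<and>
     (\<forall>w g. g \<in> hom C (Cod C f) w \<longrightarrow> Cmp C g f = Zer C (Dom C f) w \<longrightarrow>
        (\<exists>!h. h \<in> hom C (Cod C q) w \<and> Cmp C h q = g))"

definition is_mono :: "('o, 'm) acat \<Rightarrow> 'm \<Rightarrow> bool" where
  "is_mono C f \<longleftrightarrow> f \<in> Arr C \<and>
     (\<forall>w g h. g \<in> hom C w (Dom C f) \<longrightarrow> h \<in> hom C w (Dom C f) \<longrightarrow>
        Cmp C f g = Cmp C f h \<longrightarrow> g = h)"

definition is_epi :: "('o, 'm) acat \<Rightarrow> 'm \<Rightarrow> bool" where
  "is_epi C f \<longleftrightarrow> f \<in> Arr C \<and>
     (\<forall>w g h. g \<in> hom C (Cod C f) w \<longrightarrow> h \<in> hom C (Cod C f) w \<longrightarrow>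
        Cmp C g f = Cmp C h f \<longrightarrow> g = h)"

definition is_iso :: "('o, 'm) acat \<Rightarrow> 'm \<Rightarrow> bool" where
  "is_iso C f \<longleftrightarrow> f \<in> Arr C \<and> (\<exists>g \<in> hom C (Cod C f) (Dom C f).
     Cmp C g f = Idm C (Dom C f) \<and> Cmp C f g = Idm C (Cod C f))"

definition abelian_category :: "('o, 'm) acat \<Rightarrow> bool" where
  "abelian_category C \<longleftrightarrow> preadditive C \<and>
     (\<exists>z. zero_object C z) \<and>
     (\<forall>x \<in> Obj C. \<forall>y \<in> Obj C. has_biproduct C x y) \<and>
     (\<forall>f \<in> Arr C. (\<exists>k. is_kernel C f k) \<and> (\<exists>q. is_cokernel C f q)) \<and>
     (\<forall>f. is_mono C f \<longrightarrow> (\<exists>g. is_kernel C g f)) \<and>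
     (\<forall>f. is_epi C f \<longrightarrow> (\<exists>g. is_cokernel C g f))"

definition projective :: "('o, 'm) acat \<Rightarrow> 'o \<Rightarrow> bool" where
  "projective C P \<longleftrightarrow> P \<in> Obj C \<and>
     (\<forall>e g. is_epi C e \<longrightarrow> g \<in> hom C P (Cod C e) \<longrightarrow>
        (\<exists>h \<in> hom C P (Dom C e). Cmp C e h = g))"

text \<open>The 2-category of arrows: objects are arrows a : A1 \<rightarrow> A0 (A1 = Dom a, A0 = Cod a).\<close>

definition arr_hom :: "('o, 'm) acat \<Rightarrow> 'm \<Rightarrow> 'm \<Rightarrow> ('m \<times> 'm) set" where
  "arr_hom C a b = {(f0, f1). f0 \<in> hom C (Cod C a) (Cod C b) \<and> f1 \<in> hom C (Dom C a) (Dom C b) \<and>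
                              Cmp C b f1 = Cmp C f0 a}"

definition two_cell :: "('o, 'm) acat \<Rightarrow> 'm \<Rightarrow> 'm \<Rightarrow> 'm \<times> 'm \<Rightarrow> 'm \<times> 'm \<Rightarrow> 'm set" where
  "two_cell C a b f g = {\<alpha> \<in> hom C (Cod C a) (Dom C b).
      Add C (snd f) (Ngt C (snd g)) = Cmp C \<alpha> a \<and> Add C (fst f) (Ngt C (fst g)) = Cmp C b \<alpha>}"

text \<open>Vertical composition of \<alpha> : f \<Rightarrow> g and \<beta> : g \<Rightarrow> h is \<alpha> + \<beta>; identities are zero.
  In the groupoid Hom(a,b) every arrow is invertible (inverse = negation).\<close>

definition postcomp_obj :: "('o, 'm) acat \<Rightarrow> 'm \<times> 'm \<Rightarrow> 'm \<times> 'm \<Rightarrow> 'm \<times> 'm" where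
  "postcomp_obj C u f = (Cmp C (fst u) (fst f), Cmp C (snd u) (snd f))"

definition postcomp_arr :: "('o, 'm) acat \<Rightarrow> 'm \<times> 'm \<Rightarrow> 'm \<Rightarrow> 'm" where
  "postcomp_arr C u \<alpha> = Cmp C (snd u) \<alpha>"

text \<open>The functor F = (u0,u1) \<circ> - : Hom(a,b) \<rightarrow> Hom(a,b') is an equivalence of categories:
  there is a functor G : Hom(a,b') \<rightarrow> Hom(a,b) (object map Go, arrow map Ga, where
  Ga h h' \<beta> is the image of \<beta> : h \<Rightarrow> h') together with natural isomorphisms
  \<eta> : Id \<Rightarrow> G F and \<epsilon> : F G \<Rightarrow> Id.  (All arrows of these groupoids are isomorphisms,
  so components of natural transformations are automatically invertible.)\<close>

definition postcomp_equivalence ::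
  "('o, 'm) acat \<Rightarrow> 'm \<Rightarrow> 'm \<Rightarrow> 'm \<Rightarrow> 'm \<times> 'm \<Rightarrow> bool" where
  "postcomp_equivalence C a b b' u \<longleftrightarrow>
    (let Fo = postcomp_obj C u; Fa = postcomp_arr C u in
     \<exists>Go Ga \<eta> \<epsilon>.
       \<comment> \<open>G is a functor Hom(a,b') \<rightarrow> Hom(a,b)\<close>
       (\<forall>h \<in> arr_hom C a b'. Go h \<in> arr_hom C a b) \<and>
       (\<forall>h \<in> arr_hom C a b'. \<forall>h' \<in> arr_hom C a b'. \<forall>\<beta> \<in> two_cell C a b' h h'.
           Ga h h' \<beta> \<in> two_cell C a b (Go h) (Go h')) \<and>
       (\<forall>h \<in> arr_hom C a b'. Ga h h (Zer C (Cod C a) (Dom C b')) = Zer C (Cod C a) (Dom C b)) \<and>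
       (\<forall>h \<in> arr_hom C a b'. \<forall>h' \<in> arr_hom C a b'. \<forall>h'' \<in> arr_hom C a b'.
         \<forall>\<beta> \<in> two_cell C a b' h h'. \<forall>\<beta>' \<in> two_cell C a b' h' h''.
           Ga h h'' (Add C \<beta> \<beta>') = Add C (Ga h h' \<beta>) (Ga h' h'' \<beta>')) \<and>
       \<comment> \<open>\<eta> : Id \<Rightarrow> G F natural\<close>
       (\<forall>f \<in> arr_hom C a b. \<eta> f \<in> two_cell C a b f (Go (Fo f))) \<and>
       (\<forall>f \<in> arr_hom C a b. \<forall>g \<in> arr_hom C a b. \<forall>\<alpha> \<in> two_cell C a b f g.
           Add C (\<eta> f) (Ga (Fo f) (Fo g) (Fa \<alpha>)) = Add C \<alpha> (\<eta> g)) \<and>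
       \<comment> \<open>\<epsilon> : F G \<Rightarrow> Id natural\<close>
       (\<forall>h \<in> arr_hom C a b'. \<epsilon> h \<in> two_cell C a b' (Fo (Go h)) h) \<and>
       (\<forall>h \<in> arr_hom C a b'. \<forall>h' \<in> arr_hom C a b'. \<forall>\<beta> \<in> two_cell C a b' h h'.
           Add C (\<epsilon> h) \<beta> = Add C (Fa (Ga h h' \<beta>)) (\<epsilon> h')))"

end

theory Submission
  imports Defs
begin

(* The key observation is that the square (u0,u1) is then a
   pullback: b and u1 are jointly monic (Ker b -> Ker b' is mono), and every commuting pair
   (y, x) with b' x = u0 y comes from B1 (Ker b -> Ker b' is epi, Coker b -> Coker b' is mono).
   From this, F is faithful and full on 2-cells, and with projectivity of A0 it is
   essentially surjective; a quasi-inverse is then obtained by choice. *)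

locale abelian_cat =
  fixes C :: "('o,'m) acat"
  assumes abelian: "abelian_category C"
begin

abbreviation cmp (infixr "\<cdot>" 75) where "g \<cdot> f \<equiv> Cmp C g f"
abbreviation add (infixl "\<oplus>" 65) where "f \<oplus> g \<equiv> Add C f g"
abbreviation sub (infixl "\<ominus>" 65) where "f \<ominus> g \<equiv> Add C f (Ngt C g)"

lemma preadd: "preadditive C" using abelian abelian_category_def by blast
lemma cat: "category C" using preadd preadditive_def by blast

lemmas cat_dom_cod = cat[unfolded category_def, THEN conjunct1]
lemmas cat_id = cat[unfolded category_def, THEN conjunct2, THEN conjunct1]
lemmas cat_comp = cat[unfolded category_def, THEN conjunct2, THEN conjunct2, THEN conjunct1]
lemmas cat_assoc = cat[unfolded category_def, THEN conjunct2, THEN conjunct2, THEN conjunct2, THEN conjunct1]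
lemmas cat_unit = cat[unfolded category_def, THEN conjunct2, THEN conjunct2, THEN conjunct2, THEN conjunct2]
lemmas preadd_group = preadd[unfolded preadditive_def, THEN conjunct2, THEN conjunct1]
lemmas preadd_distl = preadd[unfolded preadditive_def, THEN conjunct2, THEN conjunct2, THEN conjunct1]
lemmas preadd_distr = preadd[unfolded preadditive_def, THEN conjunct2, THEN conjunct2, THEN conjunct2]

lemma hom_iff: "f \<in> hom C x y \<longleftrightarrow> f \<in> Arr C \<and> Dom C f = x \<and> Cod C f = y" by (simp add: hom_def)
lemma hom_arr: "f \<in> hom C x y \<Longrightarrow> f \<in> Arr C" by (simp add: hom_def)
lemma arr_in_hom: "f \<in> Arr C \<Longrightarrow> f \<in> hom C (Dom C f) (Cod C f)" by (simp add: hom_def)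
lemma homI: "f \<in> Arr C \<Longrightarrow> Dom C f = x \<Longrightarrow> Cod C f = y \<Longrightarrow> f \<in> hom C x y" by (simp add: hom_def)
lemma hom_dom: "f \<in> hom C x y \<Longrightarrow> Dom C f = x" by (simp add: hom_def)
lemma hom_cod: "f \<in> hom C x y \<Longrightarrow> Cod C f = y" by (simp add: hom_def)
lemma hom_obj1: "f \<in> hom C x y \<Longrightarrow> x \<in> Obj C" using cat_dom_cod unfolding hom_def by auto
lemma hom_obj2: "f \<in> hom C x y \<Longrightarrow> y \<in> Obj C" using cat_dom_cod unfolding hom_def by auto

lemma comp: "f \<in> hom C x y \<Longrightarrow> g \<in> hom C y z \<Longrightarrow> g \<cdot> f \<in> hom C x z"
  using cat_comp by blast
lemma assoc: "f \<in> hom C w x \<Longrightarrow> g \<in> hom C x y \<Longrightarrow> h \<in> hom C y z \<Longrightarrow> h \<cdot> (g \<cdot> f) = (h \<cdot> g) \<cdot> f"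
  using cat_assoc by blast
lemma id_hom: "x \<in> Obj C \<Longrightarrow> Idm C x \<in> hom C x x" using cat_id by blast
lemma idr: "f \<in> hom C x y \<Longrightarrow> f \<cdot> Idm C x = f" using cat_unit by blast
lemma idl: "f \<in> hom C x y \<Longrightarrow> Idm C y \<cdot> f = f" using cat_unit by blast

lemma zer_hom[intro]: "x \<in> Obj C \<Longrightarrow> y \<in> Obj C \<Longrightarrow> Zer C x y \<in> hom C x y"
  using preadd_group by blast
lemma zer_hom'[intro]: "f \<in> hom C x y \<Longrightarrow> Zer C x y \<in> hom C x y"
  using hom_obj1 hom_obj2 by blast
lemma add_zero: "f \<in> hom C x y \<Longrightarrow> f \<oplus> Zer C x y = f"
  using preadd_group hom_obj1[of f x y] hom_obj2[of f x y] by blast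
lemma neg_hom[intro]: "f \<in> hom C x y \<Longrightarrow> Ngt C f \<in> hom C x y"
  using preadd_group hom_obj1[of f x y] hom_obj2[of f x y] by blast
lemma add_neg: "f \<in> hom C x y \<Longrightarrow> f \<ominus> f = Zer C x y"
  using preadd_group hom_obj1[of f x y] hom_obj2[of f x y] by blast
lemma add_hom[intro]: "f \<in> hom C x y \<Longrightarrow> g \<in> hom C x y \<Longrightarrow> f \<oplus> g \<in> hom C x y"
  using preadd_group hom_obj1[of f x y] hom_obj2[of f x y] by blast
lemma add_comm: "f \<in> hom C x y \<Longrightarrow> g \<in> hom C x y \<Longrightarrow> f \<oplus> g = g \<oplus> f"
  using preadd_group hom_obj1[of f x y] hom_obj2[of f x y] by blast
lemma add_assoc: "f \<in> hom C x y \<Longrightarrow> g \<in> hom C x y \<Longrightarrow> h \<in> hom C x y \<Longrightarrow> f \<oplus> g \<oplus> h = f \<oplus> (g \<oplus> h)"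
  using preadd_group hom_obj1[of f x y] hom_obj2[of f x y] by blast
lemma distl: "f \<in> hom C x y \<Longrightarrow> g \<in> hom C x y \<Longrightarrow> h \<in> hom C y z \<Longrightarrow> h \<cdot> (f \<oplus> g) = h \<cdot> f \<oplus> h \<cdot> g"
  using preadd_distl by blast
lemma distr: "f \<in> hom C x y \<Longrightarrow> g \<in> hom C x y \<Longrightarrow> h \<in> hom C w x \<Longrightarrow> (f \<oplus> g) \<cdot> h = f \<cdot> h \<oplus> g \<cdot> h"
  using preadd_distr by blast

lemma zero_add: "f \<in> hom C x y \<Longrightarrow> Zer C x y \<oplus> f = f"
  using add_comm[of f x y "Zer C x y"] add_zero[of f x y] zer_hom' by simp

lemma add_cancel_l:
  assumes "f \<in> hom C x y" "g \<in> hom C x y" "h \<in> hom C x y" "f \<oplus> g = f \<oplus> h"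
  shows "g = h"
proof -
  have n: "Ngt C f \<in> hom C x y" using assms by blast
  have nf: "Ngt C f \<oplus> f = Zer C x y" using add_comm[OF n assms(1)] add_neg[OF assms(1)] by simp
  have "g = (Ngt C f \<oplus> f) \<oplus> g" using nf zero_add[OF assms(2)] by simp
  also have "\<dots> = Ngt C f \<oplus> (f \<oplus> h)" using assms n by (simp add: add_assoc)
  also have "\<dots> = (Ngt C f \<oplus> f) \<oplus> h" using assms n by (simp add: add_assoc)
  also have "\<dots> = h" using nf zero_add[OF assms(3)] by simp
  finally show ?thesis .
qed

lemma sub_eq_zero:
  assumes "f \<in> hom C x y" "g \<in> hom C x y"
  shows "(f \<ominus> g = Zer C x y) = (f = g)"
proof
  assume a: "f \<ominus> g = Zer C x y"
  have n: "Ngt C g \<in> hom C x y" using assms by blast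
  have "Ngt C g \<oplus> f = Ngt C g \<oplus> g"
    using a add_neg[OF assms(2)] add_comm[OF n assms(1)] add_comm[OF n assms(2)] by simp
  thus "f = g" using assms add_cancel_l n by blast
qed (use assms add_neg in auto)

lemma neg_unique:
  assumes "f \<in> hom C x y" "g \<in> hom C x y" "f \<oplus> g = Zer C x y"
  shows "Ngt C f = g"
  using add_cancel_l[OF assms(1) neg_hom[OF assms(1)] assms(2)] assms(3) add_neg[OF assms(1)] by simp

lemma neg_neg: assumes "f \<in> hom C x y" shows "Ngt C (Ngt C f) = f"
  using neg_unique[OF neg_hom[OF assms] assms] add_comm[OF neg_hom[OF assms] assms] add_neg[OF assms] by simp

lemma comp_zero_r:
  assumes "g \<in> hom C y z" "x \<in> Obj C"
  shows "g \<cdot> Zer C x y = Zer C x z"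
proof -
  have y: "y \<in> Obj C" "z \<in> Obj C" using assms hom_obj1 hom_obj2 by blast+
  have 0: "Zer C x y \<in> hom C x y" using assms(2) y(1) by blast
  have h: "g \<cdot> Zer C x y \<in> hom C x z" using comp[OF 0 assms(1)] .
  have "g \<cdot> Zer C x y \<oplus> g \<cdot> Zer C x y = g \<cdot> (Zer C x y \<oplus> Zer C x y)"
    using distl[OF 0 0 assms(1)] by simp
  also have "\<dots> = g \<cdot> Zer C x y \<oplus> Zer C x z" using add_zero[OF h] add_zero[OF 0] by simp
  finally show ?thesis using h add_cancel_l y assms(2) by blast
qed

lemma comp_zero_l:
  assumes "f \<in> hom C x y" "z \<in> Obj C"
  shows "Zer C y z \<cdot> f = Zer C x z"
proof -
  have y: "y \<in> Obj C" "x \<in> Obj C" using assms hom_obj1 hom_obj2 by blast+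
  have 0: "Zer C y z \<in> hom C y z" using assms(2) y(1) by blast
  have h: "Zer C y z \<cdot> f \<in> hom C x z" using comp[OF assms(1) 0] .
  have "Zer C y z \<cdot> f \<oplus> Zer C y z \<cdot> f = (Zer C y z \<oplus> Zer C y z) \<cdot> f"
    using distr[OF 0 0 assms(1)] by simp
  also have "\<dots> = Zer C y z \<cdot> f \<oplus> Zer C x z" using add_zero[OF h] add_zero[OF 0] by simp
  finally show ?thesis using h add_cancel_l y assms(2) by blast
qed

lemma comp_neg_r:
  assumes "f \<in> hom C x y" "h \<in> hom C y z"
  shows "h \<cdot> Ngt C f = Ngt C (h \<cdot> f)"
proof -
  have "h \<cdot> f \<oplus> h \<cdot> Ngt C f = h \<cdot> (f \<ominus> f)" using assms by (simp add: distl neg_hom)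
  also have "\<dots> = Zer C x z" using add_neg[OF assms(1)] comp_zero_r[OF assms(2) hom_obj1[OF assms(1)]] by simp
  finally show ?thesis using assms neg_unique comp neg_hom by metis
qed

lemma comp_neg_l:
  assumes "f \<in> hom C x y" "h \<in> hom C w x"
  shows "Ngt C f \<cdot> h = Ngt C (f \<cdot> h)"
proof -
  have "f \<cdot> h \<oplus> Ngt C f \<cdot> h = (f \<ominus> f) \<cdot> h" using assms by (simp add: distr neg_hom)
  also have "\<dots> = Zer C w y" using add_neg[OF assms(1)] comp_zero_l[OF assms(2) hom_obj2[OF assms(1)]] by simp
  finally show ?thesis using assms neg_unique comp neg_hom by metis
qed

lemma sub_distl: "f \<in> hom C x y \<Longrightarrow> g \<in> hom C x y \<Longrightarrow> h \<in> hom C y z \<Longrightarrow> h \<cdot> (f \<ominus> g) = h \<cdot> f \<ominus> h \<cdot> g"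
  by (simp add: comp_neg_r distl neg_hom)
lemma sub_distr: "f \<in> hom C x y \<Longrightarrow> g \<in> hom C x y \<Longrightarrow> h \<in> hom C w x \<Longrightarrow> (f \<ominus> g) \<cdot> h = f \<cdot> h \<ominus> g \<cdot> h"
  by (simp add: comp_neg_l distr neg_hom)

text \<open>The same laws in a form usable by the simplifier: arrows are described by membership
  in Arr C together with their domain and codomain, and the typing side conditions become
  simplifier premises.\<close>

lemma dom_obj[simp]: "f \<in> Arr C \<Longrightarrow> Dom C f \<in> Obj C" using hom_obj1[OF arr_in_hom] .
lemma cod_obj[simp]: "f \<in> Arr C \<Longrightarrow> Cod C f \<in> Obj C" using hom_obj2[OF arr_in_hom] .

lemma comp_arr[simp]: "f \<in> Arr C \<Longrightarrow> g \<in> Arr C \<Longrightarrow> Dom C g = Cod C f \<Longrightarrow> g \<cdot> f \<in> Arr C"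
  using comp[OF arr_in_hom, of f g "Cod C g"] arr_in_hom[of g] hom_arr by simp

lemma comp_dom[simp]: "f \<in> Arr C \<Longrightarrow> g \<in> Arr C \<Longrightarrow> Dom C g = Cod C f \<Longrightarrow> Dom C (g \<cdot> f) = Dom C f"
  using comp[of f "Dom C f" "Cod C f" g "Cod C g"] by (simp only: hom_iff)
lemma comp_cod[simp]: "f \<in> Arr C \<Longrightarrow> g \<in> Arr C \<Longrightarrow> Dom C g = Cod C f \<Longrightarrow> Cod C (g \<cdot> f) = Cod C g"
  using comp[of f "Dom C f" "Cod C f" g "Cod C g"] by (simp only: hom_iff)
lemma assoc_arr[simp]: "f \<in> Arr C \<Longrightarrow> g \<in> Arr C \<Longrightarrow> h \<in> Arr C \<Longrightarrow> Dom C g = Cod C f \<Longrightarrow> Dom C h = Cod C g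
  \<Longrightarrow> (h \<cdot> g) \<cdot> f = h \<cdot> (g \<cdot> f)"
  using assoc[of f "Dom C f" "Cod C f" g "Cod C g" h "Cod C h"] by (simp only: hom_iff)

lemma zer_arr[simp]: "x \<in> Obj C \<Longrightarrow> y \<in> Obj C \<Longrightarrow> Zer C x y \<in> Arr C"
  using zer_hom[of x y] by (simp only: hom_iff)
lemma zer_dom[simp]: "x \<in> Obj C \<Longrightarrow> y \<in> Obj C \<Longrightarrow> Dom C (Zer C x y) = x"
  using zer_hom[of x y] by (simp only: hom_iff)
lemma zer_cod[simp]: "x \<in> Obj C \<Longrightarrow> y \<in> Obj C \<Longrightarrow> Cod C (Zer C x y) = y"
  using zer_hom[of x y] by (simp only: hom_iff)
lemma comp_zero_r_arr[simp]: "g \<in> Arr C \<Longrightarrow> x \<in> Obj C \<Longrightarrow> Dom C g = y \<Longrightarrow> g \<cdot> Zer C x y = Zer C x (Cod C g)"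
  using comp_zero_r[of g y "Cod C g" x] by (simp only: hom_iff)
lemma comp_zero_l_arr[simp]: "f \<in> Arr C \<Longrightarrow> z \<in> Obj C \<Longrightarrow> Cod C f = y \<Longrightarrow> Zer C y z \<cdot> f = Zer C (Dom C f) z"
  using comp_zero_l[of f "Dom C f" y z] by (simp only: hom_iff)

lemma add_arr[simp]: "f \<in> Arr C \<Longrightarrow> g \<in> Arr C \<Longrightarrow> Dom C g = Dom C f \<Longrightarrow> Cod C g = Cod C f \<Longrightarrow> f \<oplus> g \<in> Arr C"
  using add_hom[of f "Dom C f" "Cod C f" g] by (simp only: hom_iff)
lemma add_dom[simp]: "f \<in> Arr C \<Longrightarrow> g \<in> Arr C \<Longrightarrow> Dom C g = Dom C f \<Longrightarrow> Cod C g = Cod C f \<Longrightarrow> Dom C (f \<oplus> g) = Dom C f"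
  using add_hom[of f "Dom C f" "Cod C f" g] by (simp only: hom_iff)
lemma add_cod[simp]: "f \<in> Arr C \<Longrightarrow> g \<in> Arr C \<Longrightarrow> Dom C g = Dom C f \<Longrightarrow> Cod C g = Cod C f \<Longrightarrow> Cod C (f \<oplus> g) = Cod C f"
  using add_hom[of f "Dom C f" "Cod C f" g] by (simp only: hom_iff)
lemma neg_arr[simp]: "f \<in> Arr C \<Longrightarrow> Ngt C f \<in> Arr C" using neg_hom[of f "Dom C f" "Cod C f"] by (simp only: hom_iff)
lemma neg_dom[simp]: "f \<in> Arr C \<Longrightarrow> Dom C (Ngt C f) = Dom C f" using neg_hom[of f "Dom C f" "Cod C f"] by (simp only: hom_iff)
lemma neg_cod[simp]: "f \<in> Arr C \<Longrightarrow> Cod C (Ngt C f) = Cod C f" using neg_hom[of f "Dom C f" "Cod C f"] by (simp only: hom_iff)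

lemma distl_arr[simp]: "f \<in> Arr C \<Longrightarrow> g \<in> Arr C \<Longrightarrow> h \<in> Arr C \<Longrightarrow> Dom C g = Dom C f \<Longrightarrow> Cod C g = Cod C f \<Longrightarrow> Dom C h = Cod C f
  \<Longrightarrow> h \<cdot> (f \<oplus> g) = h \<cdot> f \<oplus> h \<cdot> g"
  using distl[of f "Dom C f" "Cod C f" g h "Cod C h"] by (simp only: hom_iff)
lemma distr_arr[simp]: "f \<in> Arr C \<Longrightarrow> g \<in> Arr C \<Longrightarrow> h \<in> Arr C \<Longrightarrow> Dom C g = Dom C f \<Longrightarrow> Cod C g = Cod C f \<Longrightarrow> Cod C h = Dom C f
  \<Longrightarrow> (f \<oplus> g) \<cdot> h = f \<cdot> h \<oplus> g \<cdot> h"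
  using distr[of f "Dom C f" "Cod C f" g h "Dom C h"] by (simp only: hom_iff)
lemma comp_neg_l_arr[simp]: "f \<in> Arr C \<Longrightarrow> h \<in> Arr C \<Longrightarrow> Cod C h = Dom C f \<Longrightarrow> Ngt C f \<cdot> h = Ngt C (f \<cdot> h)"
  using comp_neg_l[of f "Dom C f" "Cod C f" h "Dom C h"] by (simp only: hom_iff)
lemma comp_neg_r_arr[simp]: "f \<in> Arr C \<Longrightarrow> h \<in> Arr C \<Longrightarrow> Dom C h = Cod C f \<Longrightarrow> h \<cdot> Ngt C f = Ngt C (h \<cdot> f)"
  using comp_neg_r[of f "Dom C f" "Cod C f" h "Cod C h"] by (simp only: hom_iff)
lemma add_zero_arr[simp]: "f \<in> Arr C \<Longrightarrow> Dom C f = x \<Longrightarrow> Cod C f = y \<Longrightarrow> f \<oplus> Zer C x y = f"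
  using add_zero[of f x y] by (simp only: hom_iff)
lemma zero_add_arr[simp]: "f \<in> Arr C \<Longrightarrow> Dom C f = x \<Longrightarrow> Cod C f = y \<Longrightarrow> Zer C x y \<oplus> f = f"
  using zero_add[of f x y] by (simp only: hom_iff)
lemma add_neg_arr[simp]: "f \<in> Arr C \<Longrightarrow> f \<ominus> f = Zer C (Dom C f) (Cod C f)"
  using add_neg[of f "Dom C f" "Cod C f"] by (simp only: hom_iff)
lemma neg_zer[simp]: "x \<in> Obj C \<Longrightarrow> y \<in> Obj C \<Longrightarrow> Ngt C (Zer C x y) = Zer C x y"
proof -
  assume xy: "x \<in> Obj C" "y \<in> Obj C"
  have z: "Zer C x y \<in> hom C x y" using zer_hom[OF xy] .
  show ?thesis using neg_unique[OF z z add_zero[OF z]] .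
qed
lemma neg_neg_arr[simp]: "f \<in> Arr C \<Longrightarrow> Ngt C (Ngt C f) = f" using neg_neg[of f "Dom C f" "Cod C f"] by (simp only: hom_iff)
lemma idl_arr[simp]: "f \<in> Arr C \<Longrightarrow> Cod C f = y \<Longrightarrow> Idm C y \<cdot> f = f" using idl[of f "Dom C f" y] by (simp only: hom_iff)
lemma idr_arr[simp]: "f \<in> Arr C \<Longrightarrow> Dom C f = x \<Longrightarrow> f \<cdot> Idm C x = f" using idr[of f x "Cod C f"] by (simp only: hom_iff)
lemma id_arr[simp]: "x \<in> Obj C \<Longrightarrow> Idm C x \<in> Arr C" using id_hom[of x] by (simp only: hom_iff)
lemma id_cod[simp]: "x \<in> Obj C \<Longrightarrow> Cod C (Idm C x) = x" using id_hom[of x] by (simp only: hom_iff)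

lemma sub_zero_iff: "f \<in> Arr C \<Longrightarrow> g \<in> Arr C \<Longrightarrow> Dom C g = Dom C f \<Longrightarrow> Cod C g = Cod C f \<Longrightarrow>
   (f \<ominus> g = Zer C (Dom C f) (Cod C f)) = (f = g)"
  using sub_eq_zero[of f "Dom C f" "Cod C f" g] by (simp only: hom_iff)

lemma assoc_eq: "f \<in> Arr C \<Longrightarrow> g \<in> Arr C \<Longrightarrow> Dom C g = Cod C f \<Longrightarrow> X \<in> Arr C \<Longrightarrow> Cod C X = Dom C f
   \<Longrightarrow> g \<cdot> f = h \<Longrightarrow> g \<cdot> (f \<cdot> X) = h \<cdot> X"
  using assoc_arr[of X f g] by simp

lemma add_assoc_arr: "f \<in> Arr C \<Longrightarrow> g \<in> Arr C \<Longrightarrow> h \<in> Arr C \<Longrightarrow> Dom C g = Dom C f \<Longrightarrow> Cod C g = Cod C f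
  \<Longrightarrow> Dom C h = Dom C f \<Longrightarrow> Cod C h = Cod C f \<Longrightarrow> f \<oplus> g \<oplus> h = f \<oplus> (g \<oplus> h)"
  using add_assoc[of f "Dom C f" "Cod C f" g h] by (simp only: hom_iff)
lemma add_comm_arr: "f \<in> Arr C \<Longrightarrow> g \<in> Arr C \<Longrightarrow> Dom C g = Dom C f \<Longrightarrow> Cod C g = Cod C f \<Longrightarrow> f \<oplus> g = g \<oplus> f"
  using add_comm[of f "Dom C f" "Cod C f" g] by (simp only: hom_iff)
lemma neg_add_self: "f \<in> Arr C \<Longrightarrow> Ngt C f \<oplus> f = Zer C (Dom C f) (Cod C f)"
  using add_comm_arr[of "Ngt C f" f] by simp
lemma neg_add_cancel: "f \<in> Arr C \<Longrightarrow> g \<in> Arr C \<Longrightarrow> Dom C g = Dom C f \<Longrightarrow> Cod C g = Cod C f \<Longrightarrow> Ngt C f \<oplus> (f \<oplus> g) = g"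
  using add_assoc_arr[of "Ngt C f" f g] neg_add_self[of f] by simp
lemma add_neg_cancel: "f \<in> Arr C \<Longrightarrow> g \<in> Arr C \<Longrightarrow> Dom C g = Dom C f \<Longrightarrow> Cod C g = Cod C f \<Longrightarrow> f \<oplus> (Ngt C f \<oplus> g) = g"
  using add_assoc_arr[of f "Ngt C f" g] by simp
lemma add_cancel_neg: assumes "f \<in> Arr C" "g \<in> Arr C" "Dom C g = Dom C f" "Cod C g = Cod C f" shows "f \<oplus> (g \<oplus> Ngt C f) = g"
proof -
  have "f \<oplus> (g \<oplus> Ngt C f) = f \<oplus> (Ngt C f \<oplus> g)" using add_comm_arr[of g "Ngt C f"] assms by simp
  thus ?thesis using add_neg_cancel assms by simp
qed
lemma neg_add_arr: assumes "f \<in> Arr C" "g \<in> Arr C" "Dom C g = Dom C f" "Cod C g = Cod C f"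
  shows "Ngt C (f \<oplus> g) = Ngt C f \<oplus> Ngt C g"
proof -
  have "(f \<oplus> g) \<oplus> (Ngt C f \<oplus> Ngt C g) = f \<oplus> (g \<oplus> (Ngt C f \<oplus> Ngt C g))" using assms add_assoc_arr by simp
  also have "g \<oplus> (Ngt C f \<oplus> Ngt C g) = Ngt C f \<oplus> (g \<oplus> Ngt C g)"
    using assms add_assoc_arr[of g "Ngt C f" "Ngt C g"] add_assoc_arr[of "Ngt C f" g "Ngt C g"] add_comm_arr[of g "Ngt C f"] by simp
  finally have "(f \<oplus> g) \<oplus> (Ngt C f \<oplus> Ngt C g) = Zer C (Dom C f) (Cod C f)" using assms by simp
  thus ?thesis using neg_unique[of "f \<oplus> g" "Dom C f" "Cod C f" "Ngt C f \<oplus> Ngt C g"] assms by (simp add: hom_def)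
qed

lemmas group_simps = add_assoc_arr neg_add_cancel add_neg_cancel add_cancel_neg neg_add_self neg_add_arr

lemmas abelian_ker_coker =
  abelian[unfolded abelian_category_def, THEN conjunct2, THEN conjunct2, THEN conjunct2, THEN conjunct1]
lemmas abelian_mono_is_ker =
  abelian[unfolded abelian_category_def, THEN conjunct2, THEN conjunct2, THEN conjunct2, THEN conjunct2, THEN conjunct1]
lemmas abelian_epi_is_coker =
  abelian[unfolded abelian_category_def, THEN conjunct2, THEN conjunct2, THEN conjunct2, THEN conjunct2, THEN conjunct2]

lemma has_ker: "f \<in> hom C x y \<Longrightarrow> \<exists>k. is_kernel C f k" using abelian_ker_coker hom_arr by blast
lemma mono_ker: "is_mono C f \<Longrightarrow> \<exists>g. is_kernel C g f" using abelian_mono_is_ker by blast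
lemma epi_coker: "is_epi C f \<Longrightarrow> \<exists>g. is_cokernel C g f" using abelian_epi_is_coker by blast

lemma ker_dom: "is_kernel C f k \<Longrightarrow> Cod C k = Dom C f" unfolding is_kernel_def by blast
lemma ker_arr: "is_kernel C f k \<Longrightarrow> f \<in> Arr C" unfolding is_kernel_def by blast
lemma coker_cod: "is_cokernel C f q \<Longrightarrow> Dom C q = Cod C f" unfolding is_cokernel_def by blast
lemma coker_arr: "is_cokernel C f q \<Longrightarrow> f \<in> Arr C" unfolding is_cokernel_def by blast

lemma ker_hom: "is_kernel C f k \<Longrightarrow> f \<in> hom C x y \<Longrightarrow> k \<in> hom C (Dom C k) x"
  unfolding is_kernel_def hom_def by auto
lemma ker_zero: "is_kernel C f k \<Longrightarrow> f \<in> hom C x y \<Longrightarrow> f \<cdot> k = Zer C (Dom C k) y"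
  unfolding is_kernel_def hom_def by auto

lemma ker_univ:
  assumes "is_kernel C f k" "f \<in> hom C x y" "g \<in> hom C w x" "f \<cdot> g = Zer C w y"
  shows "\<exists>!h. h \<in> hom C w (Dom C k) \<and> k \<cdot> h = g"
proof -
  have "\<forall>w g. g \<in> hom C w (Dom C f) \<longrightarrow> f \<cdot> g = Zer C w (Cod C f) \<longrightarrow>
      (\<exists>!h. h \<in> hom C w (Dom C k) \<and> k \<cdot> h = g)"
    using assms(1) unfolding is_kernel_def by blast
  then show ?thesis using assms(3,4) unfolding hom_dom[OF assms(2)] hom_cod[OF assms(2)] by blast
qed

lemma ker_fact:
  "is_kernel C f k \<Longrightarrow> f \<in> hom C x y \<Longrightarrow> g \<in> hom C w x \<Longrightarrow> f \<cdot> g = Zer C w y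
   \<Longrightarrow> \<exists>h\<in>hom C w (Dom C k). k \<cdot> h = g"
  using ker_univ by blast

lemma coker_hom: "is_cokernel C f q \<Longrightarrow> f \<in> hom C x y \<Longrightarrow> q \<in> hom C y (Cod C q)"
  unfolding is_cokernel_def hom_def by auto
lemma coker_zero: "is_cokernel C f q \<Longrightarrow> f \<in> hom C x y \<Longrightarrow> q \<cdot> f = Zer C x (Cod C q)"
  unfolding is_cokernel_def hom_def by auto

lemma coker_univ:
  assumes "is_cokernel C f q" "f \<in> hom C x y" "g \<in> hom C y w" "g \<cdot> f = Zer C x w"
  shows "\<exists>!h. h \<in> hom C (Cod C q) w \<and> h \<cdot> q = g"
proof -
  have "\<forall>w g. g \<in> hom C (Cod C f) w \<longrightarrow> g \<cdot> f = Zer C (Dom C f) w \<longrightarrow>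
      (\<exists>!h. h \<in> hom C (Cod C q) w \<and> h \<cdot> q = g)"
    using assms(1) unfolding is_cokernel_def by blast
  then show ?thesis using assms(3,4) unfolding hom_dom[OF assms(2)] hom_cod[OF assms(2)] by blast
qed

lemma coker_fact:
  "is_cokernel C f q \<Longrightarrow> f \<in> hom C x y \<Longrightarrow> g \<in> hom C y w \<Longrightarrow> g \<cdot> f = Zer C x w
   \<Longrightarrow> \<exists>h\<in>hom C (Cod C q) w. h \<cdot> q = g"
  using coker_univ by blast

text \<open>Kernels are monic and cokernels are epic, by uniqueness in the universal property.\<close>

lemma ker_mono:
  assumes "is_kernel C f k"
  shows "is_mono C k"
  unfolding is_mono_def
proof (intro conjI allI impI)
  show "k \<in> Arr C" using assms unfolding is_kernel_def by blast
  have f: "f \<in> hom C (Dom C f) (Cod C f)" using assms arr_in_hom unfolding is_kernel_def by blast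
  have k: "k \<in> hom C (Dom C k) (Dom C f)" using ker_hom[OF assms f] .
  fix w g h assume g: "g \<in> hom C w (Dom C k)" and h: "h \<in> hom C w (Dom C k)" and e: "k \<cdot> g = k \<cdot> h"
  have kg: "k \<cdot> g \<in> hom C w (Dom C f)" using comp[OF g k] .
  have "f \<cdot> (k \<cdot> g) = Zer C (Dom C k) (Cod C f) \<cdot> g" using assoc[OF g k f] ker_zero[OF assms f] by simp
  also have "\<dots> = Zer C w (Cod C f)" using comp_zero_l[OF g hom_obj2[OF f]] .
  finally have "\<exists>!h'. h' \<in> hom C w (Dom C k) \<and> k \<cdot> h' = k \<cdot> g" using ker_univ[OF assms f kg] by simp
  from the1_equality[OF this, of g] the1_equality[OF this, of h] show "g = h" using g h e by simp
qed

lemma coker_epi: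
  assumes "is_cokernel C f q"
  shows "is_epi C q"
  unfolding is_epi_def
proof (intro conjI allI impI)
  show "q \<in> Arr C" using assms unfolding is_cokernel_def by blast
  have f: "f \<in> hom C (Dom C f) (Cod C f)" using assms arr_in_hom unfolding is_cokernel_def by blast
  have q: "q \<in> hom C (Cod C f) (Cod C q)" using coker_hom[OF assms f] .
  fix w g h assume g: "g \<in> hom C (Cod C q) w" and h: "h \<in> hom C (Cod C q) w" and e: "g \<cdot> q = h \<cdot> q"
  have gq: "g \<cdot> q \<in> hom C (Cod C f) w" using comp[OF q g] .
  have "(g \<cdot> q) \<cdot> f = g \<cdot> Zer C (Dom C f) (Cod C q)" using assoc[OF f q g] coker_zero[OF assms f] by simp
  also have "\<dots> = Zer C (Dom C f) w" using comp_zero_r[OF g hom_obj1[OF f]] .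
  finally have "\<exists>!h'. h' \<in> hom C (Cod C q) w \<and> h' \<cdot> q = g \<cdot> q" using coker_univ[OF assms f gq] by simp
  from the1_equality[OF this, of g] the1_equality[OF this, of h] show "g = h" using g h e by simp
qed

lemma mono_canc:
  "is_mono C m \<Longrightarrow> g \<in> hom C w (Dom C m) \<Longrightarrow> h \<in> hom C w (Dom C m) \<Longrightarrow> m \<cdot> g = m \<cdot> h \<Longrightarrow> g = h"
  unfolding is_mono_def by blast
lemma epi_canc:
  "is_epi C e \<Longrightarrow> g \<in> hom C (Cod C e) w \<Longrightarrow> h \<in> hom C (Cod C e) w \<Longrightarrow> g \<cdot> e = h \<cdot> e \<Longrightarrow> g = h"
  unfolding is_epi_def by blast

lemma mono_comp:
  assumes "is_mono C m" "is_mono C n" "m \<in> hom C x y" "n \<in> hom C z x"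
  shows "is_mono C (m \<cdot> n)"
  unfolding is_mono_def
proof (intro conjI allI impI)
  have mn: "m \<cdot> n \<in> hom C z y" using comp[OF assms(4,3)] .
  then show "m \<cdot> n \<in> Arr C" by (rule hom_arr)
  fix w g h assume g: "g \<in> hom C w (Dom C (m \<cdot> n))" and h: "h \<in> hom C w (Dom C (m \<cdot> n))"
    and e: "(m \<cdot> n) \<cdot> g = (m \<cdot> n) \<cdot> h"
  have g': "g \<in> hom C w z" and h': "h \<in> hom C w z" using g h hom_dom[OF mn] by simp_all
  have "m \<cdot> (n \<cdot> g) = m \<cdot> (n \<cdot> h)" using e assoc[OF g' assms(4,3)] assoc[OF h' assms(4,3)] by simp
  moreover have "n \<cdot> g \<in> hom C w (Dom C m)" "n \<cdot> h \<in> hom C w (Dom C m)"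
    using comp[OF g' assms(4)] comp[OF h' assms(4)] hom_dom[OF assms(3)] by simp_all
  ultimately have "n \<cdot> g = n \<cdot> h" using mono_canc[OF assms(1)] by blast
  moreover have "g \<in> hom C w (Dom C n)" "h \<in> hom C w (Dom C n)" using g' h' hom_dom[OF assms(4)] by simp_all
  ultimately show "g = h" using mono_canc[OF assms(2)] by blast
qed

lemma epi_I:
  assumes "e \<in> hom C x y" "\<And>w d. d \<in> hom C y w \<Longrightarrow> d \<cdot> e = Zer C x w \<Longrightarrow> d = Zer C y w"
  shows "is_epi C e"
  unfolding is_epi_def
proof (intro conjI allI impI)
  show "e \<in> Arr C" using assms hom_arr by blast
  fix w g h assume g: "g \<in> hom C (Cod C e) w" and h: "h \<in> hom C (Cod C e) w" and gh: "g \<cdot> e = h \<cdot> e"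
  have c: "Cod C e = y" using assms hom_cod by blast
  have "(g \<ominus> h) \<cdot> e = Zer C x w"
    using sub_distr[of g y w h e x] g h c assms gh add_neg[of "h \<cdot> e" x w] comp by auto
  hence "g \<ominus> h = Zer C y w" using assms(2) g h c by blast
  thus "g = h" using sub_eq_zero g h c by blast
qed

lemma mono_I:
  assumes "m \<in> hom C x y" "\<And>w d. d \<in> hom C w x \<Longrightarrow> m \<cdot> d = Zer C w y \<Longrightarrow> d = Zer C w x"
  shows "is_mono C m"
  unfolding is_mono_def
proof (intro conjI allI impI)
  show "m \<in> Arr C" using assms hom_arr by blast
  fix w g h assume g: "g \<in> hom C w (Dom C m)" and h: "h \<in> hom C w (Dom C m)" and gh: "m \<cdot> g = m \<cdot> h"
  have c: "Dom C m = x" using assms hom_dom by blast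
  have "m \<cdot> (g \<ominus> h) = Zer C w y"
    using sub_distl[of g w x h m y] g h c assms gh add_neg[of "m \<cdot> h" w y] comp by auto
  hence "g \<ominus> h = Zer C w x" using assms(2) g h c by blast
  thus "g = h" using sub_eq_zero g h c by blast
qed

text \<open>This is where the exactness axiom
  "every mono is a kernel" enters.\<close>

lemma image_minimal:
  assumes f: "f \<in> hom C x y" and cq: "is_cokernel C f q" and km: "is_kernel C q m"
    and nh: "n \<in> hom C N (Dom C m)" and n_mono: "is_mono C n"
    and e': "e' \<in> hom C x N" and fe: "(m \<cdot> n) \<cdot> e' = f"
  shows "\<exists>r\<in>hom C (Dom C m) N. n \<cdot> r = Idm C (Dom C m)"
proof -
  have q: "q \<in> hom C y (Cod C q)" using coker_hom[OF cq f] .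
  have m: "m \<in> hom C (Dom C m) y" using ker_hom[OF km q] .
  have mn: "m \<cdot> n \<in> hom C N y" using comp[OF nh m] .
  have "is_mono C (m \<cdot> n)" using mono_comp[OF ker_mono[OF km] n_mono m nh] .
  then obtain H where H: "is_kernel C H (m \<cdot> n)" using mono_ker by blast
  have "Dom C H = y" using ker_dom[OF H] hom_cod[OF mn] by simp
  hence Hh: "H \<in> hom C y (Cod C H)" using arr_in_hom[OF ker_arr[OF H]] by simp
  have "H \<cdot> f = (H \<cdot> (m \<cdot> n)) \<cdot> e'" using fe assoc[OF e' mn Hh] by simp
  also have "\<dots> = Zer C x (Cod C H)"
    using ker_zero[OF H Hh] hom_dom[OF mn] comp_zero_l[OF e' hom_obj2[OF Hh]] by simp
  finally obtain H' where H': "H' \<in> hom C (Cod C q) (Cod C H)" "H' \<cdot> q = H"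
    using coker_fact[OF cq f Hh] by blast
  have "H \<cdot> m = H' \<cdot> (q \<cdot> m)" using H'(2) assoc[OF m q H'(1)] by simp
  also have "\<dots> = Zer C (Dom C m) (Cod C H)"
    using ker_zero[OF km q] comp_zero_r[OF H'(1) hom_obj1[OF m]] by simp
  finally obtain r where r: "r \<in> hom C (Dom C m) (Dom C (m \<cdot> n))" "(m \<cdot> n) \<cdot> r = m"
    using ker_fact[OF H Hh m] by blast
  have rh: "r \<in> hom C (Dom C m) N" using r(1) hom_dom[OF mn] by simp
  have "m \<cdot> (n \<cdot> r) = m \<cdot> Idm C (Dom C m)" using r(2) assoc[OF rh nh m] idr[OF m] by simp
  hence "n \<cdot> r = Idm C (Dom C m)"
    using mono_canc[OF ker_mono[OF km] comp[OF rh nh] id_hom[OF hom_obj1[OF m]]] by blast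
  thus ?thesis using rh by blast
qed

text \<open>A map d with d e = 0 kills e through its kernel n, which by minimality
  of the image is split epi, so d = 0.\<close>

lemma image_factorisation:
  assumes f: "f \<in> hom C x y" and cq: "is_cokernel C f q" and km: "is_kernel C q m"
  shows "\<exists>e \<in> hom C x (Dom C m). m \<cdot> e = f \<and> is_epi C e"
proof -
  define I where "I = Dom C m"
  have q: "q \<in> hom C y (Cod C q)" using coker_hom[OF cq f] .
  have m: "m \<in> hom C I y" unfolding I_def using ker_hom[OF km q] .
  obtain e where e: "e \<in> hom C x I" "m \<cdot> e = f"
    using ker_fact[OF km q f coker_zero[OF cq f]] unfolding I_def by blast
  have "is_epi C e"
  proof (rule epi_I[OF e(1)])
    fix W d assume d: "d \<in> hom C I W" "d \<cdot> e = Zer C x W"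
    obtain n where n: "is_kernel C d n" using has_ker[OF d(1)] by blast
    have nh: "n \<in> hom C (Dom C n) I" using ker_hom[OF n d(1)] .
    obtain e' where e': "e' \<in> hom C x (Dom C n)" "n \<cdot> e' = e"
      using ker_fact[OF n d(1) e(1) d(2)] by blast
    have "(m \<cdot> n) \<cdot> e' = f" using e(2) e'(2) assoc[OF e'(1) nh m] by simp
    then obtain r where r: "r \<in> hom C I (Dom C n)" "n \<cdot> r = Idm C I"
      using image_minimal[OF f cq km _ ker_mono[OF n] e'(1)] nh unfolding I_def by blast
    have "d = (d \<cdot> n) \<cdot> r" using r(2) idr[OF d(1)] assoc[OF r(1) nh d(1)] by simp
    also have "\<dots> = Zer C I W"
      using ker_zero[OF n d(1)] comp_zero_l[OF r(1) hom_obj2[OF d(1)]] by simp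
    finally show "d = Zer C I W" .
  qed
  thus ?thesis using e unfolding I_def by blast
qed

lemma epi_is_coker:
  assumes ep: "is_epi C e" and eh: "e \<in> hom C x y" and k: "is_kernel C e \<kappa>"
    and t: "t \<in> hom C x W" and tk: "t \<cdot> \<kappa> = Zer C (Dom C \<kappa>) W"
  shows "\<exists>t'\<in>hom C y W. t' \<cdot> e = t"
proof -
  obtain g where g: "is_cokernel C g e" using epi_coker[OF ep] by blast
  define G where "G = Dom C g"
  have "Cod C g = x" using coker_cod[OF g] hom_dom[OF eh] by simp
  hence gh: "g \<in> hom C G x" unfolding G_def using arr_in_hom[OF coker_arr[OF g]] by simp
  have eg: "e \<cdot> g = Zer C G y" using coker_zero[OF g gh] hom_cod[OF eh] by simp
  obtain g' where g': "g' \<in> hom C G (Dom C \<kappa>)" "\<kappa> \<cdot> g' = g" using ker_fact[OF k eh gh eg] by blast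
  have kh: "\<kappa> \<in> hom C (Dom C \<kappa>) x" using ker_hom[OF k eh] .
  have "t \<cdot> g = (t \<cdot> \<kappa>) \<cdot> g'" using g'(2) assoc[OF g'(1) kh t] by simp
  also have "\<dots> = Zer C G W" using tk comp_zero_l[OF g'(1) hom_obj2[OF t]] by simp
  finally have tg: "t \<cdot> g = Zer C G W" .
  show ?thesis using coker_fact[OF g gh t tg] hom_cod[OF eh] by simp
qed

lemma projective_lift:
  assumes "projective C P" "is_epi C e" "e \<in> hom C x y" "g \<in> hom C P y"
  shows "\<exists>h\<in>hom C P x. e \<cdot> h = g"
  using assms unfolding projective_def by (metis hom_cod hom_dom)

lemma proj_lift:
  assumes P: "projective C P" and f: "f \<in> hom C x y" and cq: "is_cokernel C f q"
    and d: "d \<in> hom C P y" and qd: "q \<cdot> d = Zer C P (Cod C q)"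
  shows "\<exists>\<gamma>\<in>hom C P x. f \<cdot> \<gamma> = d"
proof -
  have q: "q \<in> hom C y (Cod C q)" using coker_hom[OF cq f] .
  obtain m where km: "is_kernel C q m" using has_ker[OF q] by blast
  obtain e where e: "e \<in> hom C x (Dom C m)" "m \<cdot> e = f" "is_epi C e" using image_factorisation[OF f cq km] by blast
  obtain d' where d': "d' \<in> hom C P (Dom C m)" "m \<cdot> d' = d" using ker_fact[OF km q d qd] by blast
  obtain \<gamma> where gh: "\<gamma> \<in> hom C P x" and g: "e \<cdot> \<gamma> = d'"
    using projective_lift[OF P e(3) e(1) d'(1)] by blast
  have mh: "m \<in> hom C (Dom C m) y" using ker_hom[OF km q] .
  have "f \<cdot> \<gamma> = m \<cdot> (e \<cdot> \<gamma>)" using e(2) assoc[OF gh e(1) mh] by simp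
  also have "\<dots> = d" using g d'(2) by simp
  finally show ?thesis using gh by blast
qed

text \<open>A morphism m that is both mono and epi admits lifts of all maps into its codomain:
  m is the kernel of some H, and H m = 0 with m epi forces H = 0.\<close>

lemma mono_epi_lift:
  assumes mono: "is_mono C m" and epi: "is_epi C m" and g: "g \<in> hom C W (Cod C m)"
  shows "\<exists>f\<in>hom C W (Dom C m). m \<cdot> f = g"
proof -
  obtain H where H: "is_kernel C H m" using mono_ker[OF mono] by blast
  have m: "m \<in> Arr C" using mono unfolding is_mono_def by blast
  have Hh: "H \<in> hom C (Cod C m) (Cod C H)"
    using ker_dom[OF H] arr_in_hom[of H] H unfolding is_kernel_def by auto
  have "H \<cdot> m = Zer C (Dom C m) (Cod C H)" using ker_zero[OF H Hh] .
  also have "\<dots> = Zer C (Cod C m) (Cod C H) \<cdot> m" using m hom_obj2[OF Hh] by simp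
  finally have H0: "H = Zer C (Cod C m) (Cod C H)"
    using epi_canc[OF epi Hh] zer_hom'[OF Hh] by blast
  have "H \<cdot> g = Zer C W (Cod C H)"
    using trans[OF arg_cong[OF H0, of "\<lambda>h. h \<cdot> g"] comp_zero_l[OF g hom_obj2[OF Hh]]] by simp
  thus ?thesis using ker_fact[OF H Hh g] by simp
qed

lemma epi_right_factor:
  assumes \<pi>: "\<pi> \<in> hom C P I" and j: "j \<in> hom C X P" and e: "\<pi> \<cdot> j = e" and epi: "is_epi C e"
  shows "is_epi C \<pi>"
proof (rule epi_I[OF \<pi>])
  fix G d assume d: "d \<in> hom C I G" "d \<cdot> \<pi> = Zer C P G"
  have eh: "e \<in> hom C X I" using comp[OF j \<pi>] e by simp
  have "d \<cdot> e = Zer C P G \<cdot> j" using assoc[OF j \<pi> d(1)] d(2) e by simp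
  also have "\<dots> = Zer C I G \<cdot> e"
    using comp_zero_l[OF j hom_obj2[OF d(1)]] comp_zero_l[OF eh hom_obj2[OF d(1)]] by simp
  finally show "d = Zer C I G"
    using epi_canc[OF epi, of d G "Zer C I G"] d(1) zer_hom'[OF d(1)] hom_cod[OF eh] by simp
qed

lemma biproduct:
  assumes x: "x \<in> Obj C" and y: "y \<in> Obj C"
  obtains D i1 i2 p1 p2 where "D \<in> Obj C"
    "i1 \<in> hom C x D" "i2 \<in> hom C y D" "p1 \<in> hom C D x" "p2 \<in> hom C D y"
    "p1 \<cdot> i1 = Idm C x" "p2 \<cdot> i2 = Idm C y" "p2 \<cdot> i1 = Zer C x y" "p1 \<cdot> i2 = Zer C y x"
    "\<And>X. X \<in> Arr C \<Longrightarrow> Cod C X = D \<Longrightarrow> X = i1 \<cdot> (p1 \<cdot> X) \<oplus> i2 \<cdot> (p2 \<cdot> X)"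
proof -
  have "has_biproduct C x y"
    using x y abelian[unfolded abelian_category_def, THEN conjunct2, THEN conjunct2, THEN conjunct1] by blast
  then obtain D i1 i2 p1 p2 where D: "D \<in> Obj C"
    and i1: "i1 \<in> hom C x D" and i2: "i2 \<in> hom C y D"
    and p1: "p1 \<in> hom C D x" and p2: "p2 \<in> hom C D y"
    and p1i1: "p1 \<cdot> i1 = Idm C x" and p2i2: "p2 \<cdot> i2 = Idm C y"
    and sum: "i1 \<cdot> p1 \<oplus> i2 \<cdot> p2 = Idm C D"
    unfolding has_biproduct_def by auto
  have [simp]: "i1 \<in> Arr C" "Dom C i1 = x" "Cod C i1 = D" "i2 \<in> Arr C" "Dom C i2 = y" "Cod C i2 = D"
    "p1 \<in> Arr C" "Dom C p1 = D" "Cod C p1 = x" "p2 \<in> Arr C" "Dom C p2 = D" "Cod C p2 = y"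
    using i1 i2 p1 p2 by (simp_all add: hom_def)
  have [simp]: "x \<in> Obj C" "y \<in> Obj C" "D \<in> Obj C" using x y D .
  have decomp: "X = i1 \<cdot> (p1 \<cdot> X) \<oplus> i2 \<cdot> (p2 \<cdot> X)" if X: "X \<in> Arr C" "Cod C X = D" for X
  proof -
    have "X = (i1 \<cdot> p1 \<oplus> i2 \<cdot> p2) \<cdot> X" using sum X by simp
    also have "\<dots> = i1 \<cdot> (p1 \<cdot> X) \<oplus> i2 \<cdot> (p2 \<cdot> X)" using X by simp
    finally show ?thesis .
  qed
  have "i1 \<oplus> Zer C x D = i1 \<oplus> i2 \<cdot> (p2 \<cdot> i1)" using decomp[of i1] p1i1 by simp
  hence "i2 \<cdot> (p2 \<cdot> i1) = Zer C x D"
    using add_cancel_l[of i1 x D "Zer C x D" "i2 \<cdot> (p2 \<cdot> i1)"] by (simp add: hom_def)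
  hence "p2 \<cdot> (i2 \<cdot> (p2 \<cdot> i1)) = Zer C x y" by simp
  hence p2i1: "p2 \<cdot> i1 = Zer C x y" using assoc_eq[of i2 p2 "p2 \<cdot> i1" "Idm C y"] p2i2 by simp
  have "i2 = i1 \<cdot> (p1 \<cdot> i2) \<oplus> i2" using decomp[of i2] p2i2 by simp
  also have "\<dots> = i2 \<oplus> i1 \<cdot> (p1 \<cdot> i2)" using add_comm_arr[of "i1 \<cdot> (p1 \<cdot> i2)" i2] by simp
  finally have "i2 \<oplus> Zer C y D = i2 \<oplus> i1 \<cdot> (p1 \<cdot> i2)" by simp
  hence "i1 \<cdot> (p1 \<cdot> i2) = Zer C y D"
    using add_cancel_l[of i2 y D "Zer C y D" "i1 \<cdot> (p1 \<cdot> i2)"] by (simp add: hom_def)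
  hence "p1 \<cdot> (i1 \<cdot> (p1 \<cdot> i2)) = Zer C y x" by simp
  hence p1i2: "p1 \<cdot> i2 = Zer C y x" using assoc_eq[of i1 p1 "p1 \<cdot> i2" "Idm C x"] p1i1 by simp
  show ?thesis using that D i1 i2 p1 p2 p1i1 p2i2 p2i1 p1i2 decomp by blast
qed

end

locale comparison = abelian_cat +
  fixes b b' u0 u1 k k' \<phi> q q' \<psi>
  assumes b_arr[simp]: "b \<in> Arr C" and b'_arr[simp]: "b' \<in> Arr C"
    and u: "(u0, u1) \<in> arr_hom C b b'"
    and kk: "is_kernel C b k" and kk': "is_kernel C b' k'"
    and phi: "\<phi> \<in> hom C (Dom C k) (Dom C k')" and phik: "Cmp C k' \<phi> = Cmp C u1 k" and phi_iso: "is_iso C \<phi>"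
    and qq: "is_cokernel C b q" and qq': "is_cokernel C b' q'"
    and psi: "\<psi> \<in> hom C (Cod C q) (Cod C q')" and psiq: "Cmp C \<psi> q = Cmp C q' u0" and psi_iso: "is_iso C \<psi>"
begin

lemma u0[simp]: "u0 \<in> Arr C" "Dom C u0 = Cod C b" "Cod C u0 = Cod C b'"
  using u unfolding arr_hom_def hom_def by auto
lemma u1[simp]: "u1 \<in> Arr C" "Dom C u1 = Dom C b" "Cod C u1 = Dom C b'"
  using u unfolding arr_hom_def hom_def by auto
lemma usq: "b' \<cdot> u1 = u0 \<cdot> b" using u unfolding arr_hom_def by auto
lemma usq_comp[simp]: "X \<in> Arr C \<Longrightarrow> Cod C X = Dom C b \<Longrightarrow> b' \<cdot> (u1 \<cdot> X) = u0 \<cdot> (b \<cdot> X)"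
  using assoc_eq[OF u1(1) b'_arr _ _ _ usq] by simp

lemma k[simp]: "k \<in> Arr C" "Cod C k = Dom C b"
  using kk unfolding is_kernel_def by auto
lemma k'[simp]: "k' \<in> Arr C" "Cod C k' = Dom C b'"
  using kk' unfolding is_kernel_def by auto
lemma bk: "b \<cdot> k = Zer C (Dom C k) (Cod C b)" using kk unfolding is_kernel_def by auto
lemma bk_comp[simp]: "X \<in> Arr C \<Longrightarrow> Cod C X = Dom C k \<Longrightarrow> b \<cdot> (k \<cdot> X) = Zer C (Dom C X) (Cod C b)"
  using assoc_eq[OF k(1) b_arr _ _ _ bk] by simp
lemma b'k: "b' \<cdot> k' = Zer C (Dom C k') (Cod C b')" using kk' unfolding is_kernel_def by auto
lemma b'k'_comp[simp]: "X \<in> Arr C \<Longrightarrow> Cod C X = Dom C k' \<Longrightarrow> b' \<cdot> (k' \<cdot> X) = Zer C (Dom C X) (Cod C b')"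
  using assoc_eq[OF k'(1) b'_arr _ _ _ b'k] by simp

lemma q[simp]: "q \<in> Arr C" "Dom C q = Cod C b"
  using qq unfolding is_cokernel_def by auto
lemma q'[simp]: "q' \<in> Arr C" "Dom C q' = Cod C b'"
  using qq' unfolding is_cokernel_def by auto
lemma q'b': "q' \<cdot> b' = Zer C (Dom C b') (Cod C q')" using qq' unfolding is_cokernel_def by auto
lemma q'b'_comp[simp]: "X \<in> Arr C \<Longrightarrow> Cod C X = Dom C b' \<Longrightarrow> q' \<cdot> (b' \<cdot> X) = Zer C (Dom C X) (Cod C q')"
  using assoc_eq[OF b'_arr q'(1) _ _ _ q'b'] by simp

lemma phi_simps[simp]: "\<phi> \<in> Arr C" "Dom C \<phi> = Dom C k" "Cod C \<phi> = Dom C k'" using phi by (auto simp: hom_def)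
lemma psi_simps[simp]: "\<psi> \<in> Arr C" "Dom C \<psi> = Cod C q" "Cod C \<psi> = Cod C q'" using psi by (auto simp: hom_def)
lemma phik_comp[simp]: "X \<in> Arr C \<Longrightarrow> Cod C X = Dom C k \<Longrightarrow> k' \<cdot> (\<phi> \<cdot> X) = u1 \<cdot> (k \<cdot> X)"
  using assoc_eq[OF phi_simps(1) k'(1) _ _ _ phik] by simp
lemma psiq_comp[simp]: "X \<in> Arr C \<Longrightarrow> Cod C X = Cod C b \<Longrightarrow> \<psi> \<cdot> (q \<cdot> X) = q' \<cdot> (u0 \<cdot> X)"
  using assoc_eq[OF q(1) psi_simps(1) _ _ _ psiq] by simp

definition "phi_inv = (SOME g. g \<in> hom C (Dom C k') (Dom C k) \<and> g \<cdot> \<phi> = Idm C (Dom C k) \<and> \<phi> \<cdot> g = Idm C (Dom C k'))"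
lemma phi_inv: "phi_inv \<in> hom C (Dom C k') (Dom C k) \<and> phi_inv \<cdot> \<phi> = Idm C (Dom C k) \<and> \<phi> \<cdot> phi_inv = Idm C (Dom C k')"
proof -
  have "\<exists>g. g \<in> hom C (Dom C k') (Dom C k) \<and> g \<cdot> \<phi> = Idm C (Dom C k) \<and> \<phi> \<cdot> g = Idm C (Dom C k')"
    using phi_iso unfolding is_iso_def by auto
  thus ?thesis unfolding phi_inv_def by (rule someI_ex)
qed
lemma phi_inv_simps[simp]: "phi_inv \<in> Arr C" "Dom C phi_inv = Dom C k'" "Cod C phi_inv = Dom C k"
  using phi_inv by (auto simp: hom_def)
lemma phi_inv_phi[simp]: "X \<in> Arr C \<Longrightarrow> Cod C X = Dom C k \<Longrightarrow> phi_inv \<cdot> (\<phi> \<cdot> X) = X"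
  using assoc_eq[OF phi_simps(1) phi_inv_simps(1) _ _ _ conjunct1[OF conjunct2[OF phi_inv]]] by simp
lemma phi_phi_inv[simp]: "X \<in> Arr C \<Longrightarrow> Cod C X = Dom C k' \<Longrightarrow> \<phi> \<cdot> (phi_inv \<cdot> X) = X"
  using assoc_eq[OF phi_inv_simps(1) phi_simps(1) _ _ _ conjunct2[OF conjunct2[OF phi_inv]]] by simp

definition "psi_inv = (SOME g. g \<in> hom C (Cod C q') (Cod C q) \<and> g \<cdot> \<psi> = Idm C (Cod C q) \<and> \<psi> \<cdot> g = Idm C (Cod C q'))"
lemma psi_inv: "psi_inv \<in> hom C (Cod C q') (Cod C q) \<and> psi_inv \<cdot> \<psi> = Idm C (Cod C q) \<and> \<psi> \<cdot> psi_inv = Idm C (Cod C q')"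
proof -
  have "\<exists>g. g \<in> hom C (Cod C q') (Cod C q) \<and> g \<cdot> \<psi> = Idm C (Cod C q) \<and> \<psi> \<cdot> g = Idm C (Cod C q')"
    using psi_iso unfolding is_iso_def by auto
  thus ?thesis unfolding psi_inv_def by (rule someI_ex)
qed
lemma psi_inv_simps[simp]: "psi_inv \<in> Arr C" "Dom C psi_inv = Cod C q'" "Cod C psi_inv = Cod C q"
  using psi_inv by (auto simp: hom_def)
lemma psi_inv_psi[simp]: "X \<in> Arr C \<Longrightarrow> Cod C X = Cod C q \<Longrightarrow> psi_inv \<cdot> (\<psi> \<cdot> X) = X"
  using assoc_eq[OF psi_simps(1) psi_inv_simps(1) _ _ _ conjunct1[OF conjunct2[OF psi_inv]]] by simp
lemma psi_psi_inv[simp]: "X \<in> Arr C \<Longrightarrow> Cod C X = Cod C q' \<Longrightarrow> \<psi> \<cdot> (psi_inv \<cdot> X) = X"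
  using assoc_eq[OF psi_inv_simps(1) psi_simps(1) _ _ _ conjunct2[OF conjunct2[OF psi_inv]]] by simp

text \<open>b and u1 are jointly monic: the difference of two maps with equal composites lies in
  Ker b, and Ker b \<rightarrow> Ker b' is mono.\<close>

lemma joint_cancel:
  assumes t: "t \<in> Arr C" "Cod C t = Dom C b" and t': "t' \<in> Arr C" "Dom C t' = Dom C t" "Cod C t' = Dom C b"
    and e1: "b \<cdot> t = b \<cdot> t'" and e2: "u1 \<cdot> t = u1 \<cdot> t'"
  shows "t = t'"
proof -
  define s where "s = t \<ominus> t'"
  have s: "s \<in> Arr C" "Dom C s = Dom C t" "Cod C s = Dom C b" unfolding s_def using t t' by simp_all
  have bs: "b \<cdot> s = Zer C (Dom C t) (Cod C b)" unfolding s_def using t t' e1 by simp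
  have u1s: "u1 \<cdot> s = Zer C (Dom C t) (Dom C b')" unfolding s_def using t t' e2 by simp
  obtain v where v: "v \<in> hom C (Dom C t) (Dom C k)" "k \<cdot> v = s"
    using ker_fact[OF kk arr_in_hom[OF b_arr] homI[OF s] bs] by blast
  have v': "v \<in> Arr C" "Dom C v = Dom C t" "Cod C v = Dom C k" using v(1) by (simp_all add: hom_def)
  have "k' \<cdot> (\<phi> \<cdot> v) = k' \<cdot> Zer C (Dom C t) (Dom C k')"
    using v' t u1s v(2)[symmetric] by simp
  hence "\<phi> \<cdot> v = Zer C (Dom C t) (Dom C k')"
    using mono_canc[OF ker_mono[OF kk'], of "\<phi> \<cdot> v" "Dom C t" "Zer C (Dom C t) (Dom C k')"] v' t
    by (simp add: hom_def)
  hence "v = Zer C (Dom C t) (Dom C k)" using phi_inv_phi[OF v'(1,3)] v' t by simp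
  hence "s = Zer C (Dom C t) (Dom C b)" using v(2) t by simp
  thus ?thesis using sub_zero_iff[OF t(1) t'(1)] t t' unfolding s_def by simp
qed

text \<open>Since \<psi> is invertible, a map killed by q' after u0 is already killed by q.\<close>

lemma coker_reflects_zero:
  assumes y: "y \<in> Arr C" "Cod C y = Cod C b" and z: "q' \<cdot> (u0 \<cdot> y) = Zer C (Dom C y) (Cod C q')"
  shows "q \<cdot> y = Zer C (Dom C y) (Cod C q)"
proof -
  have "q \<cdot> y = psi_inv \<cdot> (\<psi> \<cdot> (q \<cdot> y))" using y by (simp del: psiq_comp)
  also have "\<psi> \<cdot> (q \<cdot> y) = Zer C (Dom C y) (Cod C q')" using y z by simp
  finally show ?thesis using y by simp
qed

text \<open>Since \<phi> is invertible, every map into Ker b' lifts along u1 to a map into Ker b.\<close>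

lemma kernel_lift:
  assumes s: "s \<in> Arr C" "Cod C s = Dom C b'" and z: "b' \<cdot> s = Zer C (Dom C s) (Cod C b')"
  shows "\<exists>t. t \<in> Arr C \<and> Dom C t = Dom C s \<and> Cod C t = Dom C b \<and> b \<cdot> t = Zer C (Dom C s) (Cod C b) \<and> u1 \<cdot> t = s"
proof -
  obtain v where v: "v \<in> hom C (Dom C s) (Dom C k')" "k' \<cdot> v = s"
    using ker_fact[OF kk' arr_in_hom[OF b'_arr] homI[OF s(1) refl s(2)] z] by blast
  have v': "v \<in> Arr C" "Dom C v = Dom C s" "Cod C v = Dom C k'" using v(1) by (simp_all add: hom_def)
  have "u1 \<cdot> (k \<cdot> (phi_inv \<cdot> v)) = k' \<cdot> (\<phi> \<cdot> (phi_inv \<cdot> v))" using v' by (simp del: phi_phi_inv)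
  also have "\<dots> = s" using v' v(2) by (simp del: phik_comp)
  finally show ?thesis using v' by (intro exI[of _ "k \<cdot> (phi_inv \<cdot> v)"]) simp
qed

end

text \<open>The pullback of u0 and b', realised as the kernel \<kappa> : P \<rightarrow> D of u0 p1 - b' p2 on the
  biproduct D = B0 \<oplus> B'1.  The map j = (b, u1) : B1 \<rightarrow> D factors through \<kappa> by a map jP;
  the square (u0,u1) is a pullback exactly when jP is invertible.\<close>

locale comparison_pullback = comparison +
  fixes D i1 i2 p1 p2 \<kappa>
  assumes D_obj[simp]: "D \<in> Obj C"
    and i1: "i1 \<in> hom C (Cod C b) D" and i2: "i2 \<in> hom C (Dom C b') D"
    and p1: "p1 \<in> hom C D (Cod C b)" and p2: "p2 \<in> hom C D (Dom C b')"
    and p1i1: "p1 \<cdot> i1 = Idm C (Cod C b)" and p2i2: "p2 \<cdot> i2 = Idm C (Dom C b')"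
    and p2i1: "p2 \<cdot> i1 = Zer C (Cod C b) (Dom C b')" and p1i2: "p1 \<cdot> i2 = Zer C (Dom C b') (Cod C b)"
    and decomp: "\<And>X. X \<in> Arr C \<Longrightarrow> Cod C X = D \<Longrightarrow> X = i1 \<cdot> (p1 \<cdot> X) \<oplus> i2 \<cdot> (p2 \<cdot> X)"
    and kap: "is_kernel C (u0 \<cdot> p1 \<ominus> b' \<cdot> p2) \<kappa>"
begin

abbreviation "\<delta> \<equiv> u0 \<cdot> p1 \<ominus> b' \<cdot> p2"
abbreviation "P \<equiv> Dom C \<kappa>"
abbreviation "j \<equiv> i1 \<cdot> b \<oplus> i2 \<cdot> u1"

lemma biprod_simps[simp]:
  "i1 \<in> Arr C" "Dom C i1 = Cod C b" "Cod C i1 = D" "i2 \<in> Arr C" "Dom C i2 = Dom C b'" "Cod C i2 = D"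
  "p1 \<in> Arr C" "Dom C p1 = D" "Cod C p1 = Cod C b" "p2 \<in> Arr C" "Dom C p2 = D" "Cod C p2 = Dom C b'"
  using i1 i2 p1 p2 by (simp_all add: hom_def)

lemma biprod_proj_inj[simp]:
  "X \<in> Arr C \<Longrightarrow> Cod C X = Cod C b \<Longrightarrow> p1 \<cdot> (i1 \<cdot> X) = X"
  "X \<in> Arr C \<Longrightarrow> Cod C X = Dom C b' \<Longrightarrow> p2 \<cdot> (i2 \<cdot> X) = X"
  "X \<in> Arr C \<Longrightarrow> Cod C X = Cod C b \<Longrightarrow> p2 \<cdot> (i1 \<cdot> X) = Zer C (Dom C X) (Dom C b')"
  "X \<in> Arr C \<Longrightarrow> Cod C X = Dom C b' \<Longrightarrow> p1 \<cdot> (i2 \<cdot> X) = Zer C (Dom C X) (Cod C b)"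
  using assoc_eq[of i1 p1 X "Idm C (Cod C b)", OF _ _ _ _ _ p1i1]
    assoc_eq[of i2 p2 X "Idm C (Dom C b')", OF _ _ _ _ _ p2i2]
    assoc_eq[of i1 p2 X, OF _ _ _ _ _ p2i1] assoc_eq[of i2 p1 X, OF _ _ _ _ _ p1i2]
  by simp_all

lemma delta_hom: "\<delta> \<in> hom C D (Cod C b')" by (simp add: hom_def)

lemma kappa_simps[simp]: "\<kappa> \<in> Arr C" "Cod C \<kappa> = D" "P \<in> Obj C"
  using ker_hom[OF kap delta_hom] hom_obj1 by (auto simp: hom_def)

lemma kappa_square: "u0 \<cdot> (p1 \<cdot> \<kappa>) = b' \<cdot> (p2 \<cdot> \<kappa>)"
proof -
  have "\<delta> \<cdot> \<kappa> = Zer C P (Cod C b')" using ker_zero[OF kap delta_hom] .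
  hence "u0 \<cdot> (p1 \<cdot> \<kappa>) \<ominus> b' \<cdot> (p2 \<cdot> \<kappa>) = Zer C P (Cod C b')" by simp
  thus ?thesis using sub_zero_iff[of "u0 \<cdot> (p1 \<cdot> \<kappa>)" "b' \<cdot> (p2 \<cdot> \<kappa>)"] by simp
qed

lemma pullback_cone:
  assumes x: "x \<in> Arr C" "Cod C x = Dom C b'" and y: "y \<in> Arr C" "Dom C y = Dom C x" "Cod C y = Cod C b"
    and e: "b' \<cdot> x = u0 \<cdot> y"
  shows "\<exists>z. z \<in> hom C (Dom C x) P \<and> \<kappa> \<cdot> z = i1 \<cdot> y \<oplus> i2 \<cdot> x"
proof -
  have "\<delta> \<cdot> (i1 \<cdot> y \<oplus> i2 \<cdot> x) = Zer C (Dom C x) (Cod C b')" using x y e by simp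
  thus ?thesis using ker_fact[OF kap delta_hom, of "i1 \<cdot> y \<oplus> i2 \<cdot> x"] x y by (simp add: hom_def)
qed

definition "jP = (SOME j'. j' \<in> hom C (Dom C b) P \<and> \<kappa> \<cdot> j' = j)"

lemma jP: "jP \<in> hom C (Dom C b) P" "\<kappa> \<cdot> jP = j"
proof -
  have "\<exists>j'. j' \<in> hom C (Dom C b) P \<and> \<kappa> \<cdot> j' = j"
    using pullback_cone[of u1 b] by (simp add: usq)
  then show "jP \<in> hom C (Dom C b) P" "\<kappa> \<cdot> jP = j"
    unfolding jP_def by (metis (mono_tags, lifting) someI_ex)+
qed

lemma jP_simps[simp]:
  "jP \<in> Arr C" "Dom C jP = Dom C b" "Cod C jP = P"
  "X \<in> Arr C \<Longrightarrow> Cod C X = Dom C b \<Longrightarrow> p1 \<cdot> (\<kappa> \<cdot> (jP \<cdot> X)) = b \<cdot> X"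
  "X \<in> Arr C \<Longrightarrow> Cod C X = Dom C b \<Longrightarrow> p2 \<cdot> (\<kappa> \<cdot> (jP \<cdot> X)) = u1 \<cdot> X"
  using jP assoc_eq[of jP \<kappa> X j, OF _ _ _ _ _ jP(2)] by (auto simp: hom_def)

text \<open>jP is mono, because b and u1 are jointly monic.\<close>

lemma jP_mono: "is_mono C jP"
proof (rule mono_I[OF jP(1)])
  fix V d assume d: "d \<in> hom C V (Dom C b)" "jP \<cdot> d = Zer C V P"
  have [simp]: "d \<in> Arr C" "Dom C d = V" "Cod C d = Dom C b" "V \<in> Obj C"
    using d(1) hom_obj1 by (auto simp: hom_def)
  have "b \<cdot> d = Zer C V (Cod C b)" using jP_simps(4)[of d] d(2) by simp
  moreover have "u1 \<cdot> d = Zer C V (Dom C b')" using jP_simps(5)[of d] d(2) by simp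
  ultimately show "d = Zer C V (Dom C b)"
    using joint_cancel[of d "Zer C V (Dom C b)"] by simp
qed

text \<open>The image factorisation b = m e induces \<pi> : P \<rightarrow> Im b with m \<pi> = p1 \<kappa> (the first leg
  of the cone lands in Im b because q reflects zero) and \<pi> jP = e.\<close>

lemma image_comparison:
  obtains m e \<pi> where "is_kernel C q m" "e \<in> hom C (Dom C b) (Dom C m)" "m \<cdot> e = b" "is_epi C e"
    "\<pi> \<in> hom C P (Dom C m)" "m \<cdot> \<pi> = p1 \<cdot> \<kappa>" "\<pi> \<cdot> jP = e"
proof -
  have qh: "q \<in> hom C (Cod C b) (Cod C q)" by (simp add: hom_def)
  obtain m where km: "is_kernel C q m" using has_ker[OF qh] by blast
  have mh: "m \<in> hom C (Dom C m) (Cod C b)" using ker_hom[OF km qh] .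
  have [simp]: "m \<in> Arr C" "Cod C m = Cod C b" using mh by (simp_all add: hom_def)
  obtain e where eh: "e \<in> hom C (Dom C b) (Dom C m)" and me: "m \<cdot> e = b" and epe: "is_epi C e"
    using image_factorisation[OF arr_in_hom[OF b_arr] qq km] by blast
  have "q \<cdot> (p1 \<cdot> \<kappa>) = Zer C P (Cod C q)"
    using coker_reflects_zero[of "p1 \<cdot> \<kappa>"] kappa_square by simp
  then obtain \<pi> where \<pi>h: "\<pi> \<in> hom C P (Dom C m)" and m\<pi>: "m \<cdot> \<pi> = p1 \<cdot> \<kappa>"
    using ker_fact[OF km qh, of "p1 \<cdot> \<kappa>" P] by (auto simp: hom_def)
  have [simp]: "\<pi> \<in> Arr C" "Dom C \<pi> = P" "Cod C \<pi> = Dom C m" using \<pi>h by (simp_all add: hom_def)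
  have "m \<cdot> (\<pi> \<cdot> jP) = m \<cdot> e"
    using me assoc_eq[of \<pi> m jP, OF _ _ _ _ _ m\<pi>] jP_simps(4)[of "Idm C (Dom C b)"] by simp
  hence "\<pi> \<cdot> jP = e" using mono_canc[OF ker_mono[OF km], of "\<pi> \<cdot> jP" "Dom C b" e] eh by (simp add: hom_def)
  thus ?thesis using that km eh me epe \<pi>h m\<pi> by blast
qed

text \<open>The kernel of \<pi> factors through jP: an element of the pullback whose first leg is
  zero has second leg in Ker b', which lifts along u1 to Ker b.\<close>

lemma ker_comparison_through_jP:
  assumes km: "is_kernel C q m" and \<pi>h: "\<pi> \<in> hom C P (Dom C m)" and m\<pi>: "m \<cdot> \<pi> = p1 \<cdot> \<kappa>"
    and k\<pi>: "is_kernel C \<pi> \<kappa>'"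
  shows "\<exists>t. t \<in> hom C (Dom C \<kappa>') (Dom C b) \<and> jP \<cdot> t = \<kappa>'"
proof -
  define N where "N = Dom C \<kappa>'"
  have mh: "m \<in> hom C (Dom C m) (Cod C b)" using ker_hom[OF km] by (simp add: hom_def)
  have [simp]: "m \<in> Arr C" "Cod C m = Cod C b" "\<pi> \<in> Arr C" "Dom C \<pi> = P" "Cod C \<pi> = Dom C m"
    using mh \<pi>h by (simp_all add: hom_def)
  have k'h: "\<kappa>' \<in> hom C N P" unfolding N_def using ker_hom[OF k\<pi> \<pi>h] .
  have [simp]: "\<kappa>' \<in> Arr C" "Dom C \<kappa>' = N" "Cod C \<kappa>' = P" "N \<in> Obj C"
    using k'h hom_obj1 by (auto simp: hom_def)
  have "m \<cdot> (\<pi> \<cdot> \<kappa>') = m \<cdot> Zer C N (Dom C m)" using ker_zero[OF k\<pi> \<pi>h] unfolding N_def by simp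
  hence p1kk: "p1 \<cdot> (\<kappa> \<cdot> \<kappa>') = Zer C N (Cod C b)"
    using assoc_eq[of \<pi> m \<kappa>', OF _ _ _ _ _ m\<pi>] by simp
  define w where "w = p2 \<cdot> (\<kappa> \<cdot> \<kappa>')"
  have [simp]: "w \<in> Arr C" "Dom C w = N" "Cod C w = Dom C b'" unfolding w_def by simp_all
  have kkw: "\<kappa> \<cdot> \<kappa>' = i2 \<cdot> w" using decomp[of "\<kappa> \<cdot> \<kappa>'"] p1kk unfolding w_def by simp
  have "u0 \<cdot> (p1 \<cdot> (\<kappa> \<cdot> \<kappa>')) = b' \<cdot> w"
    using assoc_eq[of "p1 \<cdot> \<kappa>" u0 \<kappa>', OF _ _ _ _ _ kappa_square] unfolding w_def by simp
  hence "b' \<cdot> w = Zer C N (Cod C b')" using p1kk by simp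
  then obtain t where t: "t \<in> Arr C" "Dom C t = N" "Cod C t = Dom C b" "b \<cdot> t = Zer C N (Cod C b)" "u1 \<cdot> t = w"
    using kernel_lift[of w] by auto
  have "\<kappa> \<cdot> (jP \<cdot> t) = i2 \<cdot> w"
    using assoc_eq[of jP \<kappa> t j, OF _ _ _ _ _ jP(2)] t by simp
  hence "\<kappa> \<cdot> (jP \<cdot> t) = \<kappa> \<cdot> \<kappa>'" using kkw by simp
  hence "jP \<cdot> t = \<kappa>'" using mono_canc[OF ker_mono[OF kap], of "jP \<cdot> t" N \<kappa>'] t by (simp add: hom_def)
  thus ?thesis using t unfolding N_def by (auto simp: hom_def)
qed

text \<open>jP is epi: a map g killing jP kills Ker \<pi>, hence factors through the epi \<pi> as g' \<pi>;
  then g' e = g jP = 0 forces g' = 0.\<close>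

lemma jP_epi: "is_epi C jP"
proof -
  obtain m e \<pi> where km: "is_kernel C q m" and eh: "e \<in> hom C (Dom C b) (Dom C m)"
    and epe: "is_epi C e" and \<pi>h: "\<pi> \<in> hom C P (Dom C m)" and m\<pi>: "m \<cdot> \<pi> = p1 \<cdot> \<kappa>"
    and \<pi>j: "\<pi> \<cdot> jP = e"
    using image_comparison by metis
  have \<pi>epi: "is_epi C \<pi>" using epi_right_factor[OF \<pi>h jP(1) \<pi>j epe] .
  show ?thesis
  proof (rule epi_I[OF jP(1)])
    fix G g assume g: "g \<in> hom C P G" "g \<cdot> jP = Zer C (Dom C b) G"
    obtain \<kappa>' where k\<pi>: "is_kernel C \<pi> \<kappa>'" using has_ker[OF \<pi>h] by blast
    obtain t where t: "t \<in> hom C (Dom C \<kappa>') (Dom C b)" "jP \<cdot> t = \<kappa>'"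
      using ker_comparison_through_jP[OF km \<pi>h m\<pi> k\<pi>] by blast
    have "g \<cdot> \<kappa>' = Zer C (Dom C b) G \<cdot> t" using assoc[OF t(1) jP(1) g(1)] g(2) t(2) by simp
    also have "\<dots> = Zer C (Dom C \<kappa>') G" using comp_zero_l[OF t(1) hom_obj2[OF g(1)]] .
    finally obtain g' where g'h: "g' \<in> hom C (Dom C m) G" and g'p: "g' \<cdot> \<pi> = g"
      using epi_is_coker[OF \<pi>epi \<pi>h k\<pi> g(1)] by blast
    have "g' \<cdot> e = g \<cdot> jP" using assoc[OF jP(1) \<pi>h g'h] \<pi>j g'p by simp
    also have "\<dots> = Zer C (Dom C m) G \<cdot> e"
      using g(2) comp_zero_l[OF eh hom_obj2[OF g(1)]] by simp
    finally have "g' = Zer C (Dom C m) G"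
      using epi_canc[OF epe, of g' G "Zer C (Dom C m) G"] g'h eh zer_hom'[OF g'h] by (simp add: hom_cod)
    thus "g = Zer C P G" using g'p comp_zero_l[OF \<pi>h hom_obj2[OF g(1)]] by simp
  qed
qed

lemma pullback_lift:
  assumes x: "x \<in> Arr C" "Cod C x = Dom C b'" and y: "y \<in> Arr C" "Dom C y = Dom C x" "Cod C y = Cod C b"
    and e: "b' \<cdot> x = u0 \<cdot> y"
  shows "\<exists>f1. f1 \<in> Arr C \<and> Dom C f1 = Dom C x \<and> Cod C f1 = Dom C b \<and> b \<cdot> f1 = y \<and> u1 \<cdot> f1 = x"
proof -
  obtain z where zh: "z \<in> hom C (Dom C x) P" and kz: "\<kappa> \<cdot> z = i1 \<cdot> y \<oplus> i2 \<cdot> x"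
    using pullback_cone[OF x y e] by blast
  obtain f1 where f1h: "f1 \<in> hom C (Dom C x) (Dom C b)" and jf: "jP \<cdot> f1 = z"
    using mono_epi_lift[OF jP_mono jP_epi, of z] zh by (auto simp: hom_def)
  have [simp]: "f1 \<in> Arr C" "Dom C f1 = Dom C x" "Cod C f1 = Dom C b" using f1h by (simp_all add: hom_def)
  have "b \<cdot> f1 = p1 \<cdot> (\<kappa> \<cdot> z)" using jP_simps(4)[of f1] jf by simp
  also have "\<dots> = y" using kz x y by simp
  finally have bf: "b \<cdot> f1 = y" .
  have "u1 \<cdot> f1 = p2 \<cdot> (\<kappa> \<cdot> z)" using jP_simps(5)[of f1] jf by simp
  also have "\<dots> = x" using kz x y by simp
  finally have uf: "u1 \<cdot> f1 = x" .
  show ?thesis using bf uf by (intro exI[of _ f1]) simp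
qed

end

lemma (in comparison) square_is_pullback:
  assumes x: "x \<in> Arr C" "Cod C x = Dom C b'" and y: "y \<in> Arr C" "Dom C y = Dom C x" "Cod C y = Cod C b"
    and e: "b' \<cdot> x = u0 \<cdot> y"
  shows "\<exists>f1. f1 \<in> Arr C \<and> Dom C f1 = Dom C x \<and> Cod C f1 = Dom C b \<and> b \<cdot> f1 = y \<and> u1 \<cdot> f1 = x"
proof -
  obtain D i1 i2 p1 p2 where bp: "D \<in> Obj C"
    "i1 \<in> hom C (Cod C b) D" "i2 \<in> hom C (Dom C b') D" "p1 \<in> hom C D (Cod C b)" "p2 \<in> hom C D (Dom C b')"
    "p1 \<cdot> i1 = Idm C (Cod C b)" "p2 \<cdot> i2 = Idm C (Dom C b')"
    "p2 \<cdot> i1 = Zer C (Cod C b) (Dom C b')" "p1 \<cdot> i2 = Zer C (Dom C b') (Cod C b)"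
    "\<And>X. X \<in> Arr C \<Longrightarrow> Cod C X = D \<Longrightarrow> X = i1 \<cdot> (p1 \<cdot> X) \<oplus> i2 \<cdot> (p2 \<cdot> X)"
    by (rule biproduct[OF cod_obj[OF b_arr] dom_obj[OF b'_arr]]) (rule that; assumption)
  have "u0 \<cdot> p1 \<ominus> b' \<cdot> p2 \<in> hom C D (Cod C b')" using bp by (simp add: hom_def)
  then obtain \<kappa> where "is_kernel C (u0 \<cdot> p1 \<ominus> b' \<cdot> p2) \<kappa>" using has_ker by blast
  then interpret comparison_pullback C b b' u0 u1 k k' \<phi> q q' \<psi> D i1 i2 p1 p2 \<kappa>
    using bp by unfold_locales auto
  show ?thesis using pullback_lift[OF x y e] .
qed

context abelian_cat begin

lemma arr_homD: "f \<in> arr_hom C a c \<Longrightarrow> fst f \<in> Arr C \<and> Dom C (fst f) = Cod C a \<and> Cod C (fst f) = Cod C c \<and>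
   snd f \<in> Arr C \<and> Dom C (snd f) = Dom C a \<and> Cod C (snd f) = Dom C c \<and> c \<cdot> snd f = fst f \<cdot> a"
  unfolding arr_hom_def hom_def by auto
lemma arr_homI: "f0 \<in> Arr C \<Longrightarrow> Dom C f0 = Cod C a \<Longrightarrow> Cod C f0 = Cod C c \<Longrightarrow>
   f1 \<in> Arr C \<Longrightarrow> Dom C f1 = Dom C a \<Longrightarrow> Cod C f1 = Dom C c \<Longrightarrow> c \<cdot> f1 = f0 \<cdot> a \<Longrightarrow> (f0, f1) \<in> arr_hom C a c"
  unfolding arr_hom_def hom_def by auto
lemma cellD: "\<alpha> \<in> two_cell C a c f g \<Longrightarrow> \<alpha> \<in> Arr C \<and> Dom C \<alpha> = Cod C a \<and> Cod C \<alpha> = Dom C c \<and>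
   snd f \<ominus> snd g = \<alpha> \<cdot> a \<and> fst f \<ominus> fst g = c \<cdot> \<alpha>"
  unfolding two_cell_def hom_def by auto
lemma cellI: "\<alpha> \<in> Arr C \<Longrightarrow> Dom C \<alpha> = Cod C a \<Longrightarrow> Cod C \<alpha> = Dom C c \<Longrightarrow>
   snd f \<ominus> snd g = \<alpha> \<cdot> a \<Longrightarrow> fst f \<ominus> fst g = c \<cdot> \<alpha> \<Longrightarrow> \<alpha> \<in> two_cell C a c f g"
  unfolding two_cell_def hom_def by auto

lemma cellA: "\<alpha> \<in> two_cell C a c f g \<Longrightarrow> \<alpha> \<in> Arr C \<and> Dom C \<alpha> = Cod C a \<and> Cod C \<alpha> = Dom C c"
  using cellD by blast

context
  fixes a assumes a_arr[simp]: "a \<in> Arr C"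
begin

lemma zero_cell: assumes c: "c \<in> Arr C" and f: "f \<in> arr_hom C a c"
  shows "Zer C (Cod C a) (Dom C c) \<in> two_cell C a c f f"
proof -
  have F: "fst f \<in> Arr C" "Dom C (fst f) = Cod C a" "Cod C (fst f) = Cod C c" "snd f \<in> Arr C" "Dom C (snd f) = Dom C a" "Cod C (snd f) = Dom C c"
    using arr_homD[OF f] by auto
  show ?thesis using F c by (intro cellI) simp_all
qed

lemma add_cell: assumes c: "c \<in> Arr C" and f: "f \<in> arr_hom C a c" and g: "g \<in> arr_hom C a c" and h: "h \<in> arr_hom C a c"
  and \<alpha>: "\<alpha> \<in> two_cell C a c f g" and \<beta>: "\<beta> \<in> two_cell C a c g h"
  shows "\<alpha> \<oplus> \<beta> \<in> two_cell C a c f h"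
proof -
  have F: "fst f \<in> Arr C" "Dom C (fst f) = Cod C a" "Cod C (fst f) = Cod C c" "snd f \<in> Arr C" "Dom C (snd f) = Dom C a" "Cod C (snd f) = Dom C c"
    using arr_homD[OF f] by auto
  have G: "fst g \<in> Arr C" "Dom C (fst g) = Cod C a" "Cod C (fst g) = Cod C c" "snd g \<in> Arr C" "Dom C (snd g) = Dom C a" "Cod C (snd g) = Dom C c"
    using arr_homD[OF g] by auto
  have H: "fst h \<in> Arr C" "Dom C (fst h) = Cod C a" "Cod C (fst h) = Cod C c" "snd h \<in> Arr C" "Dom C (snd h) = Dom C a" "Cod C (snd h) = Dom C c"
    using arr_homD[OF h] by auto
  have A: "\<alpha> \<in> Arr C" "Dom C \<alpha> = Cod C a" "Cod C \<alpha> = Dom C c" and A1: "snd f \<ominus> snd g = \<alpha> \<cdot> a" and A0: "fst f \<ominus> fst g = c \<cdot> \<alpha>"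
    using cellD[OF \<alpha>] by auto
  have B: "\<beta> \<in> Arr C" "Dom C \<beta> = Cod C a" "Cod C \<beta> = Dom C c" and B1: "snd g \<ominus> snd h = \<beta> \<cdot> a" and B0: "fst g \<ominus> fst h = c \<cdot> \<beta>"
    using cellD[OF \<beta>] by auto
  show ?thesis
  proof (rule cellI)
    show "snd f \<ominus> snd h = (\<alpha> \<oplus> \<beta>) \<cdot> a" using F G H A B A1[symmetric] B1[symmetric] c by (simp add: group_simps)
    show "fst f \<ominus> fst h = c \<cdot> (\<alpha> \<oplus> \<beta>)" using F G H A B A0[symmetric] B0[symmetric] c by (simp add: group_simps)
  qed (use A B in simp_all)
qed

lemma neg_cell: assumes c: "c \<in> Arr C" and f: "f \<in> arr_hom C a c" and g: "g \<in> arr_hom C a c"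
  and \<alpha>: "\<alpha> \<in> two_cell C a c f g"
  shows "Ngt C \<alpha> \<in> two_cell C a c g f"
proof -
  have F: "fst f \<in> Arr C" "Dom C (fst f) = Cod C a" "Cod C (fst f) = Cod C c" "snd f \<in> Arr C" "Dom C (snd f) = Dom C a" "Cod C (snd f) = Dom C c"
    using arr_homD[OF f] by auto
  have G: "fst g \<in> Arr C" "Dom C (fst g) = Cod C a" "Cod C (fst g) = Cod C c" "snd g \<in> Arr C" "Dom C (snd g) = Dom C a" "Cod C (snd g) = Dom C c"
    using arr_homD[OF g] by auto
  have A: "\<alpha> \<in> Arr C" "Dom C \<alpha> = Cod C a" "Cod C \<alpha> = Dom C c" and A1: "snd f \<ominus> snd g = \<alpha> \<cdot> a" and A0: "fst f \<ominus> fst g = c \<cdot> \<alpha>"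
    using cellD[OF \<alpha>] by auto
  show ?thesis
  proof (rule cellI)
    show "snd g \<ominus> snd f = Ngt C \<alpha> \<cdot> a" using F G A A1[symmetric] c by (simp add: group_simps add_comm_arr)
    show "fst g \<ominus> fst f = c \<cdot> Ngt C \<alpha>" using F G A A0[symmetric] c by (simp add: group_simps add_comm_arr)
  qed (use A in simp_all)
qed

end

end

locale postcomp = comparison +
  fixes a
  assumes a_arr[simp]: "a \<in> Arr C" and proj: "projective C (Cod C a)"
begin

abbreviation "F \<equiv> postcomp_obj C (u0, u1)"

lemma lift_from_A0:
  assumes f: "f \<in> Arr C" and cq: "is_cokernel C f qf"
    and d: "d \<in> Arr C" "Dom C d = Cod C a" "Cod C d = Cod C f"
    and z: "qf \<cdot> d = Zer C (Cod C a) (Cod C qf)"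
  shows "\<exists>\<gamma>. \<gamma> \<in> Arr C \<and> Dom C \<gamma> = Cod C a \<and> Cod C \<gamma> = Dom C f \<and> f \<cdot> \<gamma> = d"
  using proj_lift[OF proj arr_in_hom[OF f] cq homI[OF d] z] by (auto simp: hom_def)

lemma F_hom: assumes "f \<in> arr_hom C a b" shows "F f \<in> arr_hom C a b'"
proof -
  obtain f0 f1 where f: "f = (f0, f1)" by (cases f)
  have [simp]: "f0 \<in> Arr C" "Dom C f0 = Cod C a" "Cod C f0 = Cod C b" "f1 \<in> Arr C" "Dom C f1 = Dom C a" "Cod C f1 = Dom C b"
    and e: "b \<cdot> f1 = f0 \<cdot> a" using arr_homD[OF assms] f by auto
  show ?thesis unfolding f postcomp_obj_def using e by (simp add: arr_homI)
qed

lemma F_cell: assumes "f \<in> arr_hom C a b" "g \<in> arr_hom C a b" "\<alpha> \<in> two_cell C a b f g"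
  shows "postcomp_arr C (u0, u1) \<alpha> \<in> two_cell C a b' (F f) (F g)"
proof -
  obtain f0 f1 where f: "f = (f0, f1)" by (cases f)
  obtain g0 g1 where g: "g = (g0, g1)" by (cases g)
  have [simp]: "f0 \<in> Arr C" "Dom C f0 = Cod C a" "Cod C f0 = Cod C b" "f1 \<in> Arr C" "Dom C f1 = Dom C a" "Cod C f1 = Dom C b"
    using arr_homD[OF assms(1)] f by auto
  have [simp]: "g0 \<in> Arr C" "Dom C g0 = Cod C a" "Cod C g0 = Cod C b" "g1 \<in> Arr C" "Dom C g1 = Dom C a" "Cod C g1 = Dom C b"
    using arr_homD[OF assms(2)] g by auto
  have [simp]: "\<alpha> \<in> Arr C" "Dom C \<alpha> = Cod C a" "Cod C \<alpha> = Dom C b"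
    and e1: "f1 \<ominus> g1 = \<alpha> \<cdot> a" and e0: "f0 \<ominus> g0 = b \<cdot> \<alpha>" using cellD[OF assms(3)] f g by auto
  have "u1 \<cdot> f1 \<ominus> u1 \<cdot> g1 = u1 \<cdot> (f1 \<ominus> g1)" by simp
  hence 1: "u1 \<cdot> f1 \<ominus> u1 \<cdot> g1 = (u1 \<cdot> \<alpha>) \<cdot> a" using e1 by simp
  have "u0 \<cdot> f0 \<ominus> u0 \<cdot> g0 = u0 \<cdot> (f0 \<ominus> g0)" by simp
  hence 2: "u0 \<cdot> f0 \<ominus> u0 \<cdot> g0 = b' \<cdot> (u1 \<cdot> \<alpha>)" using e0 by simp
  show ?thesis unfolding f g postcomp_obj_def postcomp_arr_def using 1 2 by (intro cellI) simp_all
qed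

text \<open>F is faithful on 2-cells, since b and u1 are jointly monic.\<close>

lemma faithful: assumes "\<alpha> \<in> two_cell C a b f g" "\<alpha>' \<in> two_cell C a b f g"
  and "u1 \<cdot> \<alpha> = u1 \<cdot> \<alpha>'" shows "\<alpha> = \<alpha>'"
proof -
  have A: "\<alpha> \<in> Arr C" "Dom C \<alpha> = Cod C a" "Cod C \<alpha> = Dom C b" "fst f \<ominus> fst g = b \<cdot> \<alpha>" using cellD[OF assms(1)] by auto
  have B: "\<alpha>' \<in> Arr C" "Dom C \<alpha>' = Cod C a" "Cod C \<alpha>' = Dom C b" "fst f \<ominus> fst g = b \<cdot> \<alpha>'" using cellD[OF assms(2)] by auto
  show ?thesis using joint_cancel[of \<alpha> \<alpha>'] A B assms(3) by simp
qed

text \<open>F is full: given \<beta> : F f \<Rightarrow> F g, the pair (f0 - g0, \<beta>) commutes with the square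
  (u0,u1), so the pullback property yields \<alpha> with b \<alpha> = f0 - g0 and u1 \<alpha> = \<beta>; joint
  monicity gives \<alpha> a = f1 - g1.\<close>

lemma full:
  assumes fh: "f \<in> arr_hom C a b" and gh: "g \<in> arr_hom C a b"
    and \<beta>h: "\<beta> \<in> two_cell C a b' (F f) (F g)"
  shows "\<exists>\<alpha>\<in>two_cell C a b f g. u1 \<cdot> \<alpha> = \<beta>"
proof -
  obtain f0 f1 where f: "f = (f0, f1)" by (cases f)
  obtain g0 g1 where g: "g = (g0, g1)" by (cases g)
  have [simp]: "f0 \<in> Arr C" "Dom C f0 = Cod C a" "Cod C f0 = Cod C b" "f1 \<in> Arr C" "Dom C f1 = Dom C a" "Cod C f1 = Dom C b"
    and bf: "b \<cdot> f1 = f0 \<cdot> a" using arr_homD[OF fh] f by auto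
  have [simp]: "g0 \<in> Arr C" "Dom C g0 = Cod C a" "Cod C g0 = Cod C b" "g1 \<in> Arr C" "Dom C g1 = Dom C a" "Cod C g1 = Dom C b"
    and bg: "b \<cdot> g1 = g0 \<cdot> a" using arr_homD[OF gh] g by auto
  have [simp]: "\<beta> \<in> Arr C" "Dom C \<beta> = Cod C a" "Cod C \<beta> = Dom C b'"
    and e1: "u1 \<cdot> f1 \<ominus> u1 \<cdot> g1 = \<beta> \<cdot> a" and e0: "u0 \<cdot> f0 \<ominus> u0 \<cdot> g0 = b' \<cdot> \<beta>"
    using cellD[OF \<beta>h] f g unfolding postcomp_obj_def by auto
  have "b' \<cdot> \<beta> = u0 \<cdot> (f0 \<ominus> g0)" using e0 by simp
  then obtain \<alpha> where [simp]: "\<alpha> \<in> Arr C" "Dom C \<alpha> = Cod C a" "Cod C \<alpha> = Dom C b"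
    and b\<alpha>: "b \<cdot> \<alpha> = f0 \<ominus> g0" and u\<alpha>: "u1 \<cdot> \<alpha> = \<beta>"
    using square_is_pullback[of \<beta> "f0 \<ominus> g0"] by auto
  have "\<alpha> \<cdot> a = f1 \<ominus> g1"
  proof (rule joint_cancel)
    show "b \<cdot> (\<alpha> \<cdot> a) = b \<cdot> (f1 \<ominus> g1)"
      using bf bg assoc_eq[of \<alpha> b a, OF _ _ _ _ _ b\<alpha>] by simp
    show "u1 \<cdot> (\<alpha> \<cdot> a) = u1 \<cdot> (f1 \<ominus> g1)"
      using e1 assoc_eq[of \<alpha> u1 a, OF _ _ _ _ _ u\<alpha>] by simp
  qed simp_all
  hence "\<alpha> \<in> two_cell C a b f g" unfolding f g using b\<alpha> by (intro cellI) simp_all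
  thus ?thesis using u\<alpha> by blast
qed

text \<open>F is essentially surjective: for h = (h0,h1), lift q' h0 through the epi q to get f0,
  lift the discrepancy u0 f0 - h0 through b' to get \<epsilon>, and obtain f1 from the pullback
  property of (u0,u1).\<close>

lemma ess_surj: assumes hh: "h \<in> arr_hom C a b'"
  shows "\<exists>f\<in>arr_hom C a b. \<exists>\<epsilon>. \<epsilon> \<in> two_cell C a b' (F f) h"
proof -
  obtain h0 h1 where h: "h = (h0, h1)" by (cases h)
  have [simp]: "h0 \<in> Arr C" "Dom C h0 = Cod C a" "Cod C h0 = Cod C b'" "h1 \<in> Arr C" "Dom C h1 = Dom C a" "Cod C h1 = Dom C b'"
    and bh: "b' \<cdot> h1 = h0 \<cdot> a" using arr_homD[OF hh] h by auto
  have "psi_inv \<cdot> (q' \<cdot> h0) \<in> hom C (Cod C a) (Cod C q)" by (simp add: hom_def)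
  then obtain f0 where f0h: "f0 \<in> hom C (Cod C a) (Dom C q)" and qf0: "q \<cdot> f0 = psi_inv \<cdot> (q' \<cdot> h0)"
    using projective_lift[OF proj coker_epi[OF qq] arr_in_hom[OF q(1)]] by blast
  have [simp]: "f0 \<in> Arr C" "Dom C f0 = Cod C a" "Cod C f0 = Cod C b" using f0h by (simp_all add: hom_def)
  have "q' \<cdot> (u0 \<cdot> f0) = \<psi> \<cdot> (q \<cdot> f0)" by simp
  also have "\<dots> = q' \<cdot> h0" using qf0 by simp
  finally have quf: "q' \<cdot> (u0 \<cdot> f0) = q' \<cdot> h0" .
  define d where "d = u0 \<cdot> f0 \<ominus> h0"
  have d[simp]: "d \<in> Arr C" "Dom C d = Cod C a" "Cod C d = Cod C b'" unfolding d_def by simp_all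
  have "q' \<cdot> d = Zer C (Cod C a) (Cod C q')" unfolding d_def using quf by simp
  then obtain \<epsilon> where \<epsilon>[simp]: "\<epsilon> \<in> Arr C" "Dom C \<epsilon> = Cod C a" "Cod C \<epsilon> = Dom C b'" and b\<epsilon>: "b' \<cdot> \<epsilon> = d"
    using lift_from_A0[OF b'_arr qq' d] by auto
  have b\<epsilon>'[simp]: "\<And>X. X \<in> Arr C \<Longrightarrow> Cod C X = Cod C a \<Longrightarrow> b' \<cdot> (\<epsilon> \<cdot> X) = d \<cdot> X"
    using assoc_eq[of \<epsilon> b', OF _ _ _ _ _ b\<epsilon>] by simp
  have "b' \<cdot> (h1 \<oplus> \<epsilon> \<cdot> a) = u0 \<cdot> (f0 \<cdot> a)" using bh by (simp add: group_simps d_def)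
  then obtain f1 where f1[simp]: "f1 \<in> Arr C" "Dom C f1 = Dom C a" "Cod C f1 = Dom C b"
     and bf1: "b \<cdot> f1 = f0 \<cdot> a" and uf1: "u1 \<cdot> f1 = h1 \<oplus> \<epsilon> \<cdot> a"
    using square_is_pullback[of "h1 \<oplus> \<epsilon> \<cdot> a" "f0 \<cdot> a"] by auto
  have fh: "(f0, f1) \<in> arr_hom C a b" using bf1 by (simp add: arr_homI)
  have "\<epsilon> \<in> two_cell C a b' (F (f0, f1)) h"
    unfolding h postcomp_obj_def using uf1 b\<epsilon> unfolding d_def by (intro cellI) (simp_all add: group_simps)
  thus ?thesis using fh by blast
qed

text \<open>On objects, G h is a chosen preimage of h up to a 2-cell
  eps h : F (G h) \<Rightarrow> h (the counit); on 2-cells, G conjugates by the counits and takes the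
  unique preimage under u1.  The unit eta f : f \<Rightarrow> G (F f) is the preimage of -eps (F f).\<close>

definition "G_pair h = (SOME p. fst p \<in> arr_hom C a b \<and> snd p \<in> two_cell C a b' (F (fst p)) h)"
definition "Go h = fst (G_pair h)"
definition "eps h = snd (G_pair h)"

lemma Go:
  assumes "h \<in> arr_hom C a b'"
  shows "Go h \<in> arr_hom C a b" "eps h \<in> two_cell C a b' (F (Go h)) h"
proof -
  have "\<exists>p. fst p \<in> arr_hom C a b \<and> snd p \<in> two_cell C a b' (F (fst p)) h"
    using ess_surj[OF assms] by auto
  hence "fst (G_pair h) \<in> arr_hom C a b \<and> snd (G_pair h) \<in> two_cell C a b' (F (fst (G_pair h))) h"
    unfolding G_pair_def by (rule someI_ex)
  thus "Go h \<in> arr_hom C a b" "eps h \<in> two_cell C a b' (F (Go h)) h" unfolding Go_def eps_def by auto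
qed

lemma eps_simps:
  "h \<in> arr_hom C a b' \<Longrightarrow> eps h \<in> Arr C \<and> Dom C (eps h) = Cod C a \<and> Cod C (eps h) = Dom C b'"
  using cellA[OF Go(2)] by blast

definition "Ga h h' \<beta> = (SOME \<alpha>. \<alpha> \<in> two_cell C a b (Go h) (Go h') \<and> u1 \<cdot> \<alpha> = eps h \<oplus> \<beta> \<ominus> eps h')"

lemma Ga:
  assumes h: "h \<in> arr_hom C a b'" and h': "h' \<in> arr_hom C a b'" and \<beta>: "\<beta> \<in> two_cell C a b' h h'"
  shows "Ga h h' \<beta> \<in> two_cell C a b (Go h) (Go h')" "u1 \<cdot> Ga h h' \<beta> = eps h \<oplus> \<beta> \<ominus> eps h'"
proof -
  have Fh: "F (Go h) \<in> arr_hom C a b'" and Fh': "F (Go h') \<in> arr_hom C a b'"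
    using F_hom Go(1) h h' by blast+
  have "eps h \<oplus> \<beta> \<in> two_cell C a b' (F (Go h)) h'"
    using add_cell[OF a_arr b'_arr Fh h h' Go(2)[OF h] \<beta>] .
  hence "eps h \<oplus> \<beta> \<ominus> eps h' \<in> two_cell C a b' (F (Go h)) (F (Go h'))"
    using add_cell[OF a_arr b'_arr Fh h' Fh' _ neg_cell[OF a_arr b'_arr Fh' h' Go(2)[OF h']]] by blast
  then have "\<exists>\<alpha>. \<alpha> \<in> two_cell C a b (Go h) (Go h') \<and> u1 \<cdot> \<alpha> = eps h \<oplus> \<beta> \<ominus> eps h'"
    using full[OF Go(1)[OF h] Go(1)[OF h']] by blast
  hence "Ga h h' \<beta> \<in> two_cell C a b (Go h) (Go h') \<and> u1 \<cdot> Ga h h' \<beta> = eps h \<oplus> \<beta> \<ominus> eps h'"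
    unfolding Ga_def by (rule someI_ex)
  thus "Ga h h' \<beta> \<in> two_cell C a b (Go h) (Go h')" "u1 \<cdot> Ga h h' \<beta> = eps h \<oplus> \<beta> \<ominus> eps h'" by auto
qed

lemma Ga_simps:
  "h \<in> arr_hom C a b' \<Longrightarrow> h' \<in> arr_hom C a b' \<Longrightarrow> \<beta> \<in> two_cell C a b' h h' \<Longrightarrow>
   Ga h h' \<beta> \<in> Arr C \<and> Dom C (Ga h h' \<beta>) = Cod C a \<and> Cod C (Ga h h' \<beta>) = Dom C b"
  using cellA[OF Ga(1)] by blast

definition "eta f = (SOME \<alpha>. \<alpha> \<in> two_cell C a b f (Go (F f)) \<and> u1 \<cdot> \<alpha> = Ngt C (eps (F f)))"

lemma eta:
  assumes f: "f \<in> arr_hom C a b"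
  shows "eta f \<in> two_cell C a b f (Go (F f))" "u1 \<cdot> eta f = Ngt C (eps (F f))"
proof -
  have Ff: "F f \<in> arr_hom C a b'" using F_hom[OF f] .
  have "Ngt C (eps (F f)) \<in> two_cell C a b' (F f) (F (Go (F f)))"
    using neg_cell[OF a_arr b'_arr F_hom[OF Go(1)[OF Ff]] Ff Go(2)[OF Ff]] .
  then have "\<exists>\<alpha>. \<alpha> \<in> two_cell C a b f (Go (F f)) \<and> u1 \<cdot> \<alpha> = Ngt C (eps (F f))"
    using full[OF f Go(1)[OF Ff]] by blast
  hence "eta f \<in> two_cell C a b f (Go (F f)) \<and> u1 \<cdot> eta f = Ngt C (eps (F f))"
    unfolding eta_def by (rule someI_ex)
  thus "eta f \<in> two_cell C a b f (Go (F f))" "u1 \<cdot> eta f = Ngt C (eps (F f))" by auto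
qed

text \<open>Each of the functor and naturality laws holds after applying u1 by a computation in
  the hom-group, hence holds by faithfulness.\<close>

lemma Ga_zero:
  assumes h: "h \<in> arr_hom C a b'"
  shows "Ga h h (Zer C (Cod C a) (Dom C b')) = Zer C (Cod C a) (Dom C b)"
proof -
  have z: "Zer C (Cod C a) (Dom C b') \<in> two_cell C a b' h h" using zero_cell[OF a_arr b'_arr h] .
  have z1: "Zer C (Cod C a) (Dom C b) \<in> two_cell C a b (Go h) (Go h)"
    using zero_cell[OF a_arr b_arr Go(1)[OF h]] .
  show ?thesis using faithful[OF Ga(1)[OF h h z] z1] Ga(2)[OF h h z] eps_simps[OF h] by simp
qed

lemma Ga_add:
  assumes h: "h \<in> arr_hom C a b'" and h': "h' \<in> arr_hom C a b'" and h'': "h'' \<in> arr_hom C a b'"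
    and \<beta>: "\<beta> \<in> two_cell C a b' h h'" and \<beta>': "\<beta>' \<in> two_cell C a b' h' h''"
  shows "Ga h h'' (\<beta> \<oplus> \<beta>') = Ga h h' \<beta> \<oplus> Ga h' h'' \<beta>'"
proof -
  have bb: "\<beta> \<oplus> \<beta>' \<in> two_cell C a b' h h''" using add_cell[OF a_arr b'_arr h h' h'' \<beta> \<beta>'] .
  have s: "Ga h h' \<beta> \<oplus> Ga h' h'' \<beta>' \<in> two_cell C a b (Go h) (Go h'')"
    using add_cell[OF a_arr b_arr Go(1)[OF h] Go(1)[OF h'] Go(1)[OF h''] Ga(1)[OF h h' \<beta>] Ga(1)[OF h' h'' \<beta>']] .
  have "u1 \<cdot> Ga h h'' (\<beta> \<oplus> \<beta>') = u1 \<cdot> (Ga h h' \<beta> \<oplus> Ga h' h'' \<beta>')"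
    using Ga(2)[OF h h' \<beta>] Ga(2)[OF h' h'' \<beta>'] Ga(2)[OF h h'' bb]
      Ga_simps[OF h h' \<beta>] Ga_simps[OF h' h'' \<beta>'] eps_simps[OF h] eps_simps[OF h'] eps_simps[OF h'']
      cellA[OF \<beta>] cellA[OF \<beta>'] by (simp add: group_simps)
  thus ?thesis using faithful[OF Ga(1)[OF h h'' bb] s] by blast
qed

lemma eta_natural:
  assumes f: "f \<in> arr_hom C a b" and g: "g \<in> arr_hom C a b" and \<alpha>: "\<alpha> \<in> two_cell C a b f g"
  shows "eta f \<oplus> Ga (F f) (F g) (postcomp_arr C (u0, u1) \<alpha>) = \<alpha> \<oplus> eta g"
proof -
  have Ff: "F f \<in> arr_hom C a b'" and Fg: "F g \<in> arr_hom C a b'" using F_hom f g by auto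
  have Fa: "postcomp_arr C (u0, u1) \<alpha> = u1 \<cdot> \<alpha>" unfolding postcomp_arr_def by simp
  have Fac: "u1 \<cdot> \<alpha> \<in> two_cell C a b' (F f) (F g)" using F_cell[OF f g \<alpha>] Fa by simp
  have L: "eta f \<oplus> Ga (F f) (F g) (u1 \<cdot> \<alpha>) \<in> two_cell C a b f (Go (F g))"
    using add_cell[OF a_arr b_arr f Go(1)[OF Ff] Go(1)[OF Fg] eta(1)[OF f] Ga(1)[OF Ff Fg Fac]] .
  have R: "\<alpha> \<oplus> eta g \<in> two_cell C a b f (Go (F g))"
    using add_cell[OF a_arr b_arr f g Go(1)[OF Fg] \<alpha> eta(1)[OF g]] .
  have "u1 \<cdot> (eta f \<oplus> Ga (F f) (F g) (u1 \<cdot> \<alpha>)) = u1 \<cdot> (\<alpha> \<oplus> eta g)"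
    using eta(2)[OF f] eta(2)[OF g] Ga(2)[OF Ff Fg Fac] cellA[OF \<alpha>] cellA[OF eta(1)[OF f]]
      cellA[OF eta(1)[OF g]] Ga_simps[OF Ff Fg Fac] eps_simps[OF Ff] eps_simps[OF Fg]
    by (simp add: group_simps)
  thus ?thesis using faithful[OF L R] Fa by simp
qed

lemma eps_natural:
  assumes h: "h \<in> arr_hom C a b'" and h': "h' \<in> arr_hom C a b'" and \<beta>: "\<beta> \<in> two_cell C a b' h h'"
  shows "eps h \<oplus> \<beta> = postcomp_arr C (u0, u1) (Ga h h' \<beta>) \<oplus> eps h'"
  unfolding postcomp_arr_def
  using Ga(2)[OF h h' \<beta>] eps_simps[OF h] eps_simps[OF h'] cellA[OF \<beta>] by (simp add: group_simps)

end

theorem corollary2p2: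
  fixes C :: "('o, 'm) acat"
  assumes "abelian_category C"
    and "a \<in> Arr C" and "b \<in> Arr C" and "b' \<in> Arr C"
    and "(u0, u1) \<in> arr_hom C b b'"
    and "\<exists>k k' \<phi>. is_kernel C b k \<and> is_kernel C b' k' \<and>
           \<phi> \<in> hom C (Dom C k) (Dom C k') \<and> Cmp C k' \<phi> = Cmp C u1 k \<and> is_iso C \<phi>"
    and "\<exists>q q' \<psi>. is_cokernel C b q \<and> is_cokernel C b' q' \<and>
           \<psi> \<in> hom C (Cod C q) (Cod C q') \<and> Cmp C \<psi> q = Cmp C q' u0 \<and> is_iso C \<psi>"
    and "projective C (Cod C a)"
  shows "postcomp_equivalence C a b b' (u0, u1)"
proof -
  obtain k k' \<phi> where K: "is_kernel C b k" "is_kernel C b' k'"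
    "\<phi> \<in> hom C (Dom C k) (Dom C k')" "Cmp C k' \<phi> = Cmp C u1 k" "is_iso C \<phi>"
    using assms(6) by blast
  obtain q q' \<psi> where Q: "is_cokernel C b q" "is_cokernel C b' q'"
    "\<psi> \<in> hom C (Cod C q) (Cod C q')" "Cmp C \<psi> q = Cmp C q' u0" "is_iso C \<psi>"
    using assms(7) by blast
  interpret postcomp C b b' u0 u1 k k' \<phi> q q' \<psi> a
    by unfold_locales (use assms K Q in auto)
  show ?thesis
    unfolding postcomp_equivalence_def Let_def
    by (intro exI[of _ Go] exI[of _ Ga] exI[of _ eta] exI[of _ eps] conjI ballI)
      (simp_all add: Go Ga(1) Ga_zero Ga_add eta eta_natural eps_natural)
qed

end
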